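(* Let Assumptions A1 and A2 hold, $\kappa>1$, and run Algorithm PBA with $\alpha = \frac{1}{L}$, $\eta = \frac{\sqrt{\kappa}-1}{\sqrt{\kappa}+1}$, $0<\beta \le \frac{1}{2}(L_\Phi + \Gamma + \kappa^2)^{-1}$, and $T \ge \frac{\ln(8(1+\kappa))}{\ln((1-\kappa^{-1/2})^{-1})}$. Then the sequence $\{(x_k,y_k)\}_k$ satisfies: 1. $\|x_{k+1}-x_k\|\to 0$ and $\|y_{k+1}-y^*(x_k)\|\to 0$ as $k\to\infty$; 2. $\{(\Phi+h)(x_k)\}_k$ converges to a finite limit $H^* > -\infty$; 3. $\{(x_k,y_k)\}_k$ is bounded and has a compact set of limit points, and $(\Phi+h)(x^* ) = H^*$ for every limit point $x^*$ of $\{x_k\}_k$; 4. every limit point $x^*$ of $\{x_k\}_k$ is a critical point of $\Phi+h$, i.e. $\mathbf{0}\in\partial(\Phi+h)(x^* )$, where $\partial$ is the limiting subdifferential.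
   Context: Problem: $\min_{x\in\mathbb{R}^d} \Phi(x)+h(x)$ where $\Phi(x) := f(x,y^*(x))$ and $y^*(x) := \arg\min_{y\in\mathbb{R}^p} g(x,y)$, with $f,g:\mathbb{R}^d\times\mathbb{R}^p\to\mathbb{R}$ jointly continuously differentiable. Write $z=(x,y)$. Assumption A1: (1) $g(x,\cdot)$ is $\mu$-strongly convex for every $x$ ($\Phi$ may be nonconvex); (2) $h:\mathbb{R}^d\to\mathbb{R}\cup\{+\infty\}$ is proper and lower-semicontinuous (possibly nonsmooth and nonconvex); (3) $\Phi+h$ is bounded below and has bounded sub-level sets. Assumption A2: (1) $f$ is $M$-Lipschitz, and $\nabla f$ and $\nabla g$ are $L$-Lipschitz (in $z$); (2) the Jacobian $\nabla_x\nabla_y g$ is $\tau$-Lipschitz and the Hessian $\nabla_y^2 g$ is $\rho$-Lipschitz (in $z$). Set $\kappa = L/\mu$, $L_\Phi = L + \frac{2L^2+\tau M^2}{\mu} + \frac{\rho L M + L^3 + \tau M L}{\mu^2} + \frac{\rho L^2 M}{\mu^3}$, and $\Gamma = 3L^2 + \frac{3\tau^2M^2}{\mu^2} + 6L^2(1+\sqrt{\kappa})^2\big(\kappa + \frac{\rho M}{\mu^2}\big)^2$. Proximal map: $\mathrm{prox}_{\beta h}(v) := \arg\min_u \{\beta h(u) + \frac12\|u-v\|^2\}$ (possibly set-valued). Algorithm PBA (proximal BiO-AIDm) with parameters $\alpha,\beta,\eta>0$, $T\in\mathbb{N}$, initial $x_0,y_0$: for $k=0,1,2,\dots$: set $y^0(x_k,y_k)=u_0=y_k$;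 for $t=1,\dots,T$: $u_t = y^{t-1}(x_k,y_k) - \alpha\nabla_y g(x_k, y^{t-1}(x_k,y_k))$, $y^t(x_k,y_k) = u_t + \eta(u_t - u_{t-1})$; set $y_{k+1} = y^T(x_k,y_k)$; compute $\widehat\nabla\Phi(x_k) = \nabla_x f(x_k,y_{k+1}) - \nabla_x\nabla_y g(x_k,y_{k+1})\hat v_k$ where $\hat v_k$ is the exact solution of $\nabla_y^2 g(x_k,y_{k+1})v = \nabla_y f(x_k,y_{k+1})$; update $x_{k+1}\in \mathrm{prox}_{\beta h}(x_k - \beta\widehat\nabla\Phi(x_k))$. Limiting subdifferential: the Fréchet subdifferential of $F$ at $x$ is $\widehat\partial F(x) = \{u: \liminf_{z\to x, z\ne x} \frac{F(z)-F(x)-u^\top(z-x)}{\|z-x\|}\ge 0\}$; the limiting subdifferential $\partial F(x)$ is the set of $u$ such that there exist $x_k\to x$ with $F(x_k)\to F(x)$ and $u_k\in\widehat\partial F(x_k)$ with $u_k\to u$. A critical point of $F$ is an $x$ with $\mathbf{0}\in\partial F(x)$. *)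

theory Defs
  imports "HOL-Analysis.Analysis"
begin

definition strongly_convex_with :: "real \<Rightarrow> ('b::real_normed_vector \<Rightarrow> real) \<Rightarrow> bool" where
  "strongly_convex_with mu G \<longleftrightarrow>
     (\<forall>y y' t. 0 \<le> t \<and> t \<le> 1 \<longrightarrow>
        G (t *\<^sub>R y + (1 - t) *\<^sub>R y') \<le> t * G y + (1 - t) * G y' - mu / 2 * t * (1 - t) * (norm (y - y'))\<^sup>2)"

definition lsc :: "('a::topological_space \<Rightarrow> ereal) \<Rightarrow> bool" where
  "lsc F \<longleftrightarrow> (\<forall>x. F x \<le> Liminf (at x) F)"

definition ystar :: "('a \<times> 'b \<Rightarrow> real) \<Rightarrow> 'a \<Rightarrow> 'b" where
  "ystar g x = (THE y. \<forall>y'. g (x, y) \<le> g (x, y'))"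

definition Phi :: "('a \<times> 'b \<Rightarrow> real) \<Rightarrow> ('a \<times> 'b \<Rightarrow> real) \<Rightarrow> 'a \<Rightarrow> real" where
  "Phi f g x = f (x, ystar g x)"

definition prox :: "real \<Rightarrow> ('a::real_normed_vector \<Rightarrow> ereal) \<Rightarrow> 'a \<Rightarrow> 'a set" where
  "prox beta h v = {u. \<forall>w. ereal beta * h u + ereal ((norm (u - v))\<^sup>2 / 2)
                            \<le> ereal beta * h w + ereal ((norm (w - v))\<^sup>2 / 2)}"

fun agd :: "('b::real_vector \<Rightarrow> 'b) \<Rightarrow> real \<Rightarrow> real \<Rightarrow> 'b \<Rightarrow> nat \<Rightarrow> 'b \<times> 'b" where
  "agd gy alpha eta y0 0 = (y0, y0)"
| "agd gy alpha eta y0 (Suc t) =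
     (let (uprev, yprev) = agd gy alpha eta y0 t;
          u = yprev - alpha *\<^sub>R gy yprev
      in (u, u + eta *\<^sub>R (u - uprev)))"

definition frechet_subdiff :: "('a::euclidean_space \<Rightarrow> ereal) \<Rightarrow> 'a \<Rightarrow> 'a set" where
  "frechet_subdiff F x = {u. \<bar>F x\<bar> \<noteq> \<infinity> \<and>
      Liminf (at x) (\<lambda>z. (F z - F x - ereal (u \<bullet> (z - x))) / ereal (norm (z - x))) \<ge> 0}"

definition limiting_subdiff :: "('a::euclidean_space \<Rightarrow> ereal) \<Rightarrow> 'a \<Rightarrow> 'a set" where
  "limiting_subdiff F x = {u. \<exists>xs us. xs \<longlonglongrightarrow> x \<and> (\<lambda>k. F (xs k)) \<longlonglongrightarrow> F x
       \<and> (\<forall>k. us k \<in> frechet_subdiff F (xs k)) \<and> us \<longlonglongrightarrow> u}"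

definition limit_points :: "(nat \<Rightarrow> 'a::topological_space) \<Rightarrow> 'a set" where
  "limit_points s = {p. \<exists>r. strict_mono r \<and> (s \<circ> r) \<longlonglongrightarrow> p}"

end

theory Submission
  imports Defs
begin

text \<open>
  The inner accelerated gradient loop contracts the squared tracking error
  \<open>\<parallel>y - y*(x\<^sub>k)\<parallel>\<^sup>2\<close> at the rate \<open>(1 + \<kappa>)(1 - \<kappa>\<^sup>-\<^sup>1\<^sup>/\<^sup>2)\<^sup>T \<le> 1/8\<close>, by Nesterov's
  estimate-sequence argument. Implicit differentiation of \<open>\<nabla>\<^sub>y g(x, y*(x)) = 0\<close> shows that
  \<open>\<nabla>\<Phi>(x)\<close> is the hypergradient map \<open>\<nabla>\<^sub>x f - \<nabla>\<^sub>x\<nabla>\<^sub>y g [\<nabla>\<^sub>y\<^sup>2 g]\<^sup>-\<^sup>1 \<nabla>\<^sub>y f\<close> evaluated on the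
  graph of \<open>y*\<close>; this map is Lipschitz in \<open>(x, y)\<close>, so \<open>\<Phi>\<close> has a Lipschitz gradient and the
  inexact hypergradient used by PBA errs by at most a multiple of the tracking error.
  A proximal step therefore decreases the Lyapunov function
  \<open>V\<^sub>k = (\<Phi> + h)(x\<^sub>k) + a \<parallel>y\<^sub>k - y*(x\<^sub>k)\<parallel>\<^sup>2\<close> by a multiple of
  \<open>\<parallel>x\<^sub>k\<^sub>+\<^sub>1 - x\<^sub>k\<parallel>\<^sup>2 + \<parallel>y\<^sub>k - y*(x\<^sub>k)\<parallel>\<^sup>2\<close>; since \<open>V\<close> is bounded below, both terms tend to zero and
  \<open>(\<Phi> + h)(x\<^sub>k)\<close> converges. Along a subsequence converging to a limit point, lower
  semicontinuity and the proximal inequality make \<open>h\<close> continuous, and the optimality condition of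
  the proximal step provides Frechet subgradients of \<open>\<Phi> + h\<close> at \<open>x\<^sub>k\<^sub>+\<^sub>1\<close> that tend to zero.
\<close>

section \<open>Smooth and strongly convex functions\<close>

lemma has_real_derivative_along_line:
  fixes F :: "'x::real_normed_vector \<Rightarrow> real"
  assumes "(F has_derivative F') (at (y + t *\<^sub>R d))"
  shows "((\<lambda>s. F (y + s *\<^sub>R d)) has_real_derivative F' d) (at t)"
proof -
  have "((\<lambda>s. y + s *\<^sub>R d) has_derivative (\<lambda>s. s *\<^sub>R d)) (at t)"
    by (auto intro!: derivative_eq_intros)
  from has_derivative_compose[OF this assms]
  have "((\<lambda>s. F (y + s *\<^sub>R d)) has_derivative (\<lambda>s. F' (s *\<^sub>R d))) (at t)" .
  moreover have "(\<lambda>s. F' (s *\<^sub>R d)) = (*) (F' d)"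
    using linear_scale[OF has_derivative_linear[OF assms]] by (auto simp: fun_eq_iff mult.commute)
  ultimately show ?thesis unfolding has_field_derivative_def by simp
qed

lemma real_derivative_le_of_difference_bound:
  fixes \<psi> B :: "real \<Rightarrow> real"
  assumes der: "(\<psi> has_real_derivative D) (at 0)"
    and bound: "\<And>t. 0 < t \<Longrightarrow> t < 1 \<Longrightarrow> \<psi> t - \<psi> 0 \<le> t * B t"
    and lim: "(B \<longlongrightarrow> b) (at_right 0)"
  shows "D \<le> b"
proof (rule tendsto_le[OF trivial_limit_at_right_real lim])
  show "((\<lambda>t. (\<psi> t - \<psi> 0) / t) \<longlongrightarrow> D) (at_right 0)"
    using der unfolding has_field_derivative_iff by (auto intro: tendsto_mono at_le)
  show "\<forall>\<^sub>F t in at_right 0. (\<psi> t - \<psi> 0) / t \<le> B t"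
    unfolding eventually_at_right_field
    using bound by (intro exI[of _ 1]) (auto simp: divide_le_eq mult.commute)
qed

lemma has_derivative_norm_le_of_lipschitz:
  fixes F :: "'x::real_normed_vector \<Rightarrow> 'y::real_inner"
  assumes der: "(F has_derivative F') (at z)"
    and lip: "\<And>a b. norm (F a - F b) \<le> K * norm (a - b)"
  shows "norm (F' w) \<le> K * norm w"
proof -
  have "((\<lambda>p. F p \<bullet> F' w) has_derivative (\<lambda>v. F' v \<bullet> F' w)) (at (z + 0 *\<^sub>R w))"
    using bounded_linear.has_derivative[OF bounded_linear_inner_left der] by simp
  then have "((\<lambda>t. F (z + t *\<^sub>R w) \<bullet> F' w) has_real_derivative F' w \<bullet> F' w) (at 0)"
    by (rule has_real_derivative_along_line)
  then have sq: "F' w \<bullet> F' w \<le> K * norm w * norm (F' w)"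
  proof (rule real_derivative_le_of_difference_bound)
    fix t :: real assume "0 < t"
    have "F (z + t *\<^sub>R w) \<bullet> F' w - F (z + 0 *\<^sub>R w) \<bullet> F' w = (F (z + t *\<^sub>R w) - F z) \<bullet> F' w"
      by (simp add: inner_diff_left)
    also have "\<dots> \<le> norm (F (z + t *\<^sub>R w) - F z) * norm (F' w)" by (rule norm_cauchy_schwarz)
    also have "\<dots> \<le> (K * (t * norm w)) * norm (F' w)"
      using lip[of "z + t *\<^sub>R w" z] \<open>0 < t\<close> by (intro mult_right_mono) auto
    finally show "F (z + t *\<^sub>R w) \<bullet> F' w - F (z + 0 *\<^sub>R w) \<bullet> F' w \<le> t * (K * norm w * norm (F' w))"
      by (simp add: algebra_simps)
  qed simp
  have "norm (F (z + w) - F z) \<le> K * norm w" using lip[of "z + w" z] by simp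
  then have "0 \<le> K * norm w" by (meson norm_ge_zero order_trans)
  moreover have "norm (F' w) * norm (F' w) \<le> (K * norm w) * norm (F' w)"
    using sq by (simp add: dot_square_norm power2_eq_square)
  ultimately show ?thesis
    by (cases "norm (F' w) = 0") (simp_all add: mult_le_cancel_right_pos)
qed

lemma has_derivative_coercive_of_strongly_monotone:
  fixes F :: "'x::real_inner \<Rightarrow> 'x"
  assumes der: "(F has_derivative F') (at p)"
    and mono: "\<And>q. c * (norm (q - p))\<^sup>2 \<le> (F q - F p) \<bullet> (q - p)"
  shows "c * (norm w)\<^sup>2 \<le> F' w \<bullet> w"
proof -
  have "((\<lambda>q. - (F q \<bullet> w)) has_derivative (\<lambda>v. - (F' v \<bullet> w))) (at (p + 0 *\<^sub>R w))"
    using bounded_linear.has_derivative[OF bounded_linear_inner_left der] by (auto intro: has_derivative_minus)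
  then have "((\<lambda>t. - (F (p + t *\<^sub>R w) \<bullet> w)) has_real_derivative - (F' w \<bullet> w)) (at 0)"
    by (rule has_real_derivative_along_line)
  then have "- (F' w \<bullet> w) \<le> - (c * (norm w)\<^sup>2)"
  proof (rule real_derivative_le_of_difference_bound)
    fix t :: real assume t: "0 < t"
    have "t * (c * t * (norm w)\<^sup>2) \<le> t * ((F (p + t *\<^sub>R w) - F p) \<bullet> w)"
      using mono[of "p + t *\<^sub>R w"] t by (simp add: power2_eq_square algebra_simps)
    then have "c * t * (norm w)\<^sup>2 \<le> (F (p + t *\<^sub>R w) - F p) \<bullet> w"
      using t by (simp add: mult_le_cancel_left_pos)
    then show "- (F (p + t *\<^sub>R w) \<bullet> w) - - (F (p + 0 *\<^sub>R w) \<bullet> w) \<le> t * - (c * (norm w)\<^sup>2)"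
      by (simp add: inner_diff_left algebra_simps)
  qed simp
  then show ?thesis by simp
qed

lemma descent_lemma:
  fixes F :: "'x::real_inner \<Rightarrow> real"
  assumes der: "\<And>p. (F has_derivative (\<lambda>w. G p \<bullet> w)) (at p)"
    and lip: "\<And>a b. norm (G a - G b) \<le> K * norm (a - b)"
  shows "F y' \<le> F y + G y \<bullet> (y' - y) + K / 2 * (norm (y' - y))\<^sup>2"
proof -
  define d where "d = y' - y"
  define \<psi> where "\<psi> t = F (y + t *\<^sub>R d) - t * (G y \<bullet> d) - K / 2 * t\<^sup>2 * (norm d)\<^sup>2" for t
  have D: "DERIV \<psi> t :> (G (y + t *\<^sub>R d) \<bullet> d - G y \<bullet> d - K * t * (norm d)\<^sup>2)" for t
    unfolding \<psi>_def by (auto intro!: derivative_eq_intros has_real_derivative_along_line[OF der])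
  obtain \<xi> where xi: "0 < \<xi>" "\<xi> < 1"
    and eq: "\<psi> 1 - \<psi> 0 = (1 - 0) * (G (y + \<xi> *\<^sub>R d) \<bullet> d - G y \<bullet> d - K * \<xi> * (norm d)\<^sup>2)"
    using MVT2[of 0 1 \<psi>, OF _ D] by auto
  have "G (y + \<xi> *\<^sub>R d) \<bullet> d - G y \<bullet> d = (G (y + \<xi> *\<^sub>R d) - G y) \<bullet> d" by (simp add: inner_diff_left)
  also have "\<dots> \<le> norm (G (y + \<xi> *\<^sub>R d) - G y) * norm d" by (rule norm_cauchy_schwarz)
  also have "\<dots> \<le> (K * (\<xi> * norm d)) * norm d"
    using lip[of "y + \<xi> *\<^sub>R d" y] xi by (intro mult_right_mono) auto
  finally have "\<psi> 1 - \<psi> 0 \<le> 0" using eq by (simp add: power2_eq_square algebra_simps)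
  then show ?thesis unfolding \<psi>_def d_def by (simp add: algebra_simps)
qed

lemma strongly_convex_with_first_order:
  fixes \<phi> :: "'x::real_inner \<Rightarrow> real"
  assumes sc: "strongly_convex_with \<mu> \<phi>"
    and der: "(\<phi> has_derivative (\<lambda>w. G \<bullet> w)) (at y)"
  shows "\<phi> y + G \<bullet> (y' - y) + \<mu> / 2 * (norm (y' - y))\<^sup>2 \<le> \<phi> y'"
proof -
  define d where "d = y' - y"
  have "((\<lambda>t. \<phi> (y + t *\<^sub>R d)) has_real_derivative G \<bullet> d) (at 0)"
    by (rule has_real_derivative_along_line) (use der in simp)
  then have "G \<bullet> d \<le> \<phi> y' - \<phi> y - \<mu> / 2 * (1 - 0) * (norm d)\<^sup>2"
  proof (rule real_derivative_le_of_difference_bound)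
    fix t :: real assume "0 < t" "t < 1"
    moreover have "y + t *\<^sub>R d = t *\<^sub>R y' + (1 - t) *\<^sub>R y" unfolding d_def by (simp add: algebra_simps)
    ultimately have "\<phi> (y + t *\<^sub>R d) \<le> t * \<phi> y' + (1 - t) * \<phi> y - \<mu> / 2 * t * (1 - t) * (norm d)\<^sup>2"
      using sc unfolding strongly_convex_with_def d_def by simp
    then show "\<phi> (y + t *\<^sub>R d) - \<phi> (y + 0 *\<^sub>R d) \<le> t * (\<phi> y' - \<phi> y - \<mu> / 2 * (1 - t) * (norm d)\<^sup>2)"
      by (simp add: algebra_simps)
  next
    show "((\<lambda>t. \<phi> y' - \<phi> y - \<mu> / 2 * (1 - t) * (norm d)\<^sup>2) \<longlongrightarrow> \<phi> y' - \<phi> y - \<mu> / 2 * (1 - 0) * (norm d)\<^sup>2) (at_right 0)"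
      by (intro tendsto_intros)
  qed
  then show ?thesis unfolding d_def by simp
qed

lemma strongly_convex_with_gradient_monotone:
  fixes \<phi> :: "'x::real_inner \<Rightarrow> real"
  assumes sc: "strongly_convex_with \<mu> \<phi>"
    and d1: "(\<phi> has_derivative (\<lambda>w. G1 \<bullet> w)) (at y1)"
    and d2: "(\<phi> has_derivative (\<lambda>w. G2 \<bullet> w)) (at y2)"
  shows "\<mu> * (norm (y1 - y2))\<^sup>2 \<le> (G1 - G2) \<bullet> (y1 - y2)"
  using strongly_convex_with_first_order[OF sc d1, of y2] strongly_convex_with_first_order[OF sc d2, of y1]
  by (simp add: norm_minus_commute inner_diff_left inner_diff_right)

lemma second_difference_mean_value:
  fixes \<phi> :: "'x::real_inner \<Rightarrow> real"
  assumes grad: "\<And>p. (\<phi> has_derivative (\<lambda>w. G p \<bullet> w)) (at p)"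
    and hess: "\<And>p. (G has_derivative H p) (at p)"
    and t: "t > 0"
  obtains \<xi> \<zeta> where "0 < \<xi>" "\<xi> < t" "0 < \<zeta>" "\<zeta> < t"
    "\<phi> (y + t *\<^sub>R a + t *\<^sub>R b) - \<phi> (y + t *\<^sub>R a) - \<phi> (y + t *\<^sub>R b) + \<phi> y
       = t\<^sup>2 * (H (y + \<xi> *\<^sub>R a + \<zeta> *\<^sub>R b) b \<bullet> a)"
proof -
  define \<psi> where "\<psi> s = \<phi> ((y + t *\<^sub>R b) + s *\<^sub>R a) - \<phi> (y + s *\<^sub>R a)" for s
  have \<psi>_deriv: "DERIV \<psi> s :> G ((y + t *\<^sub>R b) + s *\<^sub>R a) \<bullet> a - G (y + s *\<^sub>R a) \<bullet> a" for s
    unfolding \<psi>_def by (intro derivative_intros has_real_derivative_along_line[OF grad])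
  obtain \<xi> where \<xi>: "0 < \<xi>" "\<xi> < t"
    and \<psi>_diff: "\<psi> t - \<psi> 0 = (t - 0) * (G ((y + t *\<^sub>R b) + \<xi> *\<^sub>R a) \<bullet> a - G (y + \<xi> *\<^sub>R a) \<bullet> a)"
    using MVT2[OF t \<psi>_deriv] by blast
  define \<omega> where "\<omega> r = G ((y + \<xi> *\<^sub>R a) + r *\<^sub>R b) \<bullet> a" for r
  have "((\<lambda>q. G q \<bullet> a) has_derivative (\<lambda>w. H q w \<bullet> a)) (at q)" for q
    by (rule bounded_linear.has_derivative[OF bounded_linear_inner_left hess])
  then have \<omega>_deriv: "DERIV \<omega> r :> H ((y + \<xi> *\<^sub>R a) + r *\<^sub>R b) b \<bullet> a" for r
    unfolding \<omega>_def by (rule has_real_derivative_along_line)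
  obtain \<zeta> where \<zeta>: "0 < \<zeta>" "\<zeta> < t"
    and \<omega>_diff: "\<omega> t - \<omega> 0 = (t - 0) * (H ((y + \<xi> *\<^sub>R a) + \<zeta> *\<^sub>R b) b \<bullet> a)"
    using MVT2[OF t \<omega>_deriv] by blast
  have "G ((y + t *\<^sub>R b) + \<xi> *\<^sub>R a) \<bullet> a - G (y + \<xi> *\<^sub>R a) \<bullet> a = \<omega> t - \<omega> 0"
    unfolding \<omega>_def by (simp add: algebra_simps)
  with \<psi>_diff \<omega>_diff have "\<psi> t - \<psi> 0 = t\<^sup>2 * (H (y + \<xi> *\<^sub>R a + \<zeta> *\<^sub>R b) b \<bullet> a)"
    by (simp add: power2_eq_square)
  moreover have "\<psi> t - \<psi> 0 = \<phi> (y + t *\<^sub>R a + t *\<^sub>R b) - \<phi> (y + t *\<^sub>R a) - \<phi> (y + t *\<^sub>R b) + \<phi> y"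
    unfolding \<psi>_def by (simp add: algebra_simps)
  ultimately show ?thesis using that \<xi> \<zeta> by metis
qed

lemma lipschitz_hessian_inner_close:
  fixes H :: "'x::real_inner \<Rightarrow> 'x \<Rightarrow> 'x"
  assumes hess_lip: "\<And>p q v. norm (H p v - H q v) \<le> \<rho> * norm (p - q) * norm v"
    and \<rho>: "\<rho> \<ge> 0" and "0 < \<xi>" "\<xi> < t" "0 < \<zeta>" "\<zeta> < t"
  shows "\<bar>H (y + \<xi> *\<^sub>R u + \<zeta> *\<^sub>R v) v \<bullet> u - H y v \<bullet> u\<bar> \<le> \<rho> * (t * (norm u + norm v)) * norm v * norm u"
proof -
  have "norm (\<xi> *\<^sub>R u + \<zeta> *\<^sub>R v) \<le> \<xi> * norm u + \<zeta> * norm v"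
    using norm_triangle_ineq[of "\<xi> *\<^sub>R u" "\<zeta> *\<^sub>R v"] assms by simp
  also have "\<dots> \<le> t * (norm u + norm v)"
    using assms by (simp add: distrib_left add_mono mult_right_mono)
  finally have step: "norm ((y + \<xi> *\<^sub>R u + \<zeta> *\<^sub>R v) - y) \<le> t * (norm u + norm v)"
    by (simp add: add.assoc)
  have "\<bar>H (y + \<xi> *\<^sub>R u + \<zeta> *\<^sub>R v) v \<bullet> u - H y v \<bullet> u\<bar>
      \<le> norm (H (y + \<xi> *\<^sub>R u + \<zeta> *\<^sub>R v) v - H y v) * norm u"
    unfolding inner_diff_left[symmetric] by (rule Cauchy_Schwarz_ineq2)
  also have "\<dots> \<le> (\<rho> * norm ((y + \<xi> *\<^sub>R u + \<zeta> *\<^sub>R v) - y) * norm v) * norm u"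
    by (intro mult_right_mono hess_lip) simp
  also have "\<dots> \<le> \<rho> * (t * (norm u + norm v)) * norm v * norm u"
    using step \<rho> by (intro mult_right_mono mult_left_mono) auto
  finally show ?thesis .
qed

text \<open>Both mixed second differences are the same number, and they approximate the two mixed
  second derivatives up to an error linear in the step.\<close>

lemma hessian_symmetric:
  fixes \<phi> :: "'x::real_inner \<Rightarrow> real"
  assumes grad: "\<And>p. (\<phi> has_derivative (\<lambda>w. G p \<bullet> w)) (at p)"
    and hess: "\<And>p. (G has_derivative H p) (at p)"
    and hess_lip: "\<And>p q v. norm (H p v - H q v) \<le> \<rho> * norm (p - q) * norm v"
    and \<rho>: "\<rho> \<ge> 0"
  shows "H y b \<bullet> a = H y a \<bullet> b"
proof -
  note close = lipschitz_hessian_inner_close[OF hess_lip \<rho>]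
  define K where "K = 2 * \<rho> * (norm a + norm b) * norm b * norm a"
  have "\<bar>H y b \<bullet> a - H y a \<bullet> b\<bar> \<le> K * t" if t: "t > 0" for t
  proof -
    obtain \<xi> \<zeta> where c1: "0 < \<xi>" "\<xi> < t" "0 < \<zeta>" "\<zeta> < t" and
      e1: "\<phi> (y + t *\<^sub>R a + t *\<^sub>R b) - \<phi> (y + t *\<^sub>R a) - \<phi> (y + t *\<^sub>R b) + \<phi> y
       = t\<^sup>2 * (H (y + \<xi> *\<^sub>R a + \<zeta> *\<^sub>R b) b \<bullet> a)"
      using second_difference_mean_value[OF grad hess t] by blast
    obtain \<xi>' \<zeta>' where c2: "0 < \<xi>'" "\<xi>' < t" "0 < \<zeta>'" "\<zeta>' < t" and
      e2: "\<phi> (y + t *\<^sub>R b + t *\<^sub>R a) - \<phi> (y + t *\<^sub>R b) - \<phi> (y + t *\<^sub>R a) + \<phi> y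
       = t\<^sup>2 * (H (y + \<xi>' *\<^sub>R b + \<zeta>' *\<^sub>R a) a \<bullet> b)"
      using second_difference_mean_value[OF grad hess t] by blast
    have swap: "y + t *\<^sub>R b + t *\<^sub>R a = y + t *\<^sub>R a + t *\<^sub>R b" by (simp add: algebra_simps)
    from e1 e2[unfolded swap] have "t\<^sup>2 * (H (y + \<xi> *\<^sub>R a + \<zeta> *\<^sub>R b) b \<bullet> a) = t\<^sup>2 * (H (y + \<xi>' *\<^sub>R b + \<zeta>' *\<^sub>R a) a \<bullet> b)"
      by linarith
    with t have "H (y + \<xi> *\<^sub>R a + \<zeta> *\<^sub>R b) b \<bullet> a = H (y + \<xi>' *\<^sub>R b + \<zeta>' *\<^sub>R a) a \<bullet> b"
      by simp
    with close[OF c1, where y = y and u = a and v = b] close[OF c2, where y = y and u = b and v = a] show ?thesis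
      unfolding K_def by (simp add: algebra_simps abs_le_iff)
  qed
  then have "\<bar>H y b \<bullet> a - H y a \<bullet> b\<bar> \<le> 0"
  proof (intro tendsto_le[OF trivial_limit_at_right_real])
    show "((\<lambda>t. K * t) \<longlongrightarrow> 0) (at_right 0)" by (auto intro!: tendsto_eq_intros)
  qed (auto simp: eventually_at_right_field intro: exI[of _ 1])
  then show ?thesis by simp
qed

section \<open>Adjoints in euclidean spaces\<close>

lemma adjoint_eq_sum_Basis:
  fixes A :: "'a::euclidean_space \<Rightarrow> 'b::euclidean_space"
  assumes "linear A"
  shows "adjoint A v = (\<Sum>i\<in>Basis. (A i \<bullet> v) *\<^sub>R i)"
  by (subst euclidean_representation[symmetric]) (simp add: adjoint_clauses[OF assms] inner_commute)

lemma norm_adjoint_le: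
  fixes A :: "'a::euclidean_space \<Rightarrow> 'b::euclidean_space"
  assumes lin: "linear A" and bound: "\<And>u. norm (A u) \<le> c * norm u" and c: "c \<ge> 0"
  shows "norm (adjoint A v) \<le> c * norm v"
proof -
  have "norm (adjoint A v) * norm (adjoint A v) = A (adjoint A v) \<bullet> v"
    by (simp add: adjoint_clauses[OF lin] dot_square_norm[symmetric] power2_eq_square[symmetric])
  also have "\<dots> \<le> norm (A (adjoint A v)) * norm v" by (rule norm_cauchy_schwarz)
  also have "\<dots> \<le> (c * norm v) * norm (adjoint A v)"
    using mult_right_mono[OF bound[of "adjoint A v"] norm_ge_zero[of v]] by (simp add: ac_simps)
  finally show ?thesis
    by (cases "adjoint A v = 0") (simp_all add: c mult_le_cancel_right_pos)
qed

lemma adjoint_diff: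
  fixes A B :: "'a::euclidean_space \<Rightarrow> 'b::euclidean_space"
  assumes "linear A" "linear B"
  shows "adjoint (\<lambda>u. A u - B u) v = adjoint A v - adjoint B v"
  using assms linear_compose_sub[OF assms]
  by (simp add: adjoint_eq_sum_Basis inner_diff_left scaleR_diff_left sum_subtractf)

section \<open>Linear convergence of Nesterov's method\<close>

lemma norm_convex_combination_sq_le:
  fixes A B :: "'x::real_inner"
  assumes "0 \<le> t" "t \<le> 1"
  shows "(norm ((1 - t) *\<^sub>R A + t *\<^sub>R B))\<^sup>2 \<le> (1 - t) * (norm A)\<^sup>2 + t * (norm B)\<^sup>2"
proof -
  have "(1 - t) * (norm A)\<^sup>2 + t * (norm B)\<^sup>2 - (norm ((1 - t) *\<^sub>R A + t *\<^sub>R B))\<^sup>2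
      = t * (1 - t) * (norm (A - B))\<^sup>2"
    unfolding power2_norm_eq_inner
    by (simp add: inner_add_left inner_add_right inner_diff_left inner_diff_right inner_commute algebra_simps)
  moreover have "t * (1 - t) * (norm (A - B))\<^sup>2 \<ge> 0" using assms by simp
  ultimately show ?thesis by linarith
qed

lemma agd_Suc:
  "agd G \<alpha> \<eta> y0 (Suc t) =
    (let u = snd (agd G \<alpha> \<eta> y0 t) - \<alpha> *\<^sub>R G (snd (agd G \<alpha> \<eta> y0 t))
     in (u, u + \<eta> *\<^sub>R (u - fst (agd G \<alpha> \<eta> y0 t))))"
  by (cases "agd G \<alpha> \<eta> y0 t") (simp add: Let_def)

locale smooth_strongly_convex =
  fixes \<phi> :: "'x::real_inner \<Rightarrow> real" and G :: "'x \<Rightarrow> 'x" and \<mu> L :: real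
  assumes has_gradient: "\<And>p. (\<phi> has_derivative (\<lambda>w. G p \<bullet> w)) (at p)"
    and strongly_convex: "strongly_convex_with \<mu> \<phi>"
    and gradient_lipschitz: "\<And>p q. norm (G p - G q) \<le> L * norm (p - q)"
    and mu_pos: "0 < \<mu>" and mu_less_L: "\<mu> < L"
begin

lemma first_order: "\<phi> p + G p \<bullet> (q - p) + \<mu> / 2 * (norm (q - p))\<^sup>2 \<le> \<phi> q"
  by (rule strongly_convex_with_first_order[OF strongly_convex has_gradient])

lemma upper_quadratic: "\<phi> q \<le> \<phi> p + G p \<bullet> (q - p) + L / 2 * (norm (q - p))\<^sup>2"
  by (rule descent_lemma[OF has_gradient gradient_lipschitz])

lemma gradient_step_decrease: "\<phi> (p - (1 / L) *\<^sub>R G p) \<le> \<phi> p - (norm (G p))\<^sup>2 / (2 * L)"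
  using upper_quadratic[where p = p and q = "p - (1 / L) *\<^sub>R G p"] mu_pos mu_less_L
  by (simp add: dot_square_norm power2_eq_square field_simps)

definition sqrt_kappa :: real where "sqrt_kappa = sqrt (L / \<mu>)"
definition theta :: real where "theta = 1 / sqrt_kappa"
definition momentum :: real where "momentum = (sqrt_kappa - 1) / (sqrt_kappa + 1)"

abbreviation iterate :: "'x \<Rightarrow> nat \<Rightarrow> 'x \<times> 'x" where
  "iterate y0 \<equiv> agd G (1 / L) momentum y0"

text \<open>Nesterov's estimate sequence: the extrapolated point \<open>snd (iterate y0 t)\<close> lies on the segment
  from \<open>fst (iterate y0 t)\<close> to \<open>estimate y0 t\<close>, and the potential below
  contracts by the factor \<open>1 - theta\<close> in every step.\<close>

primrec estimate :: "'x \<Rightarrow> nat \<Rightarrow> 'x" where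
  "estimate y0 0 = y0"
| "estimate y0 (Suc t) = (1 - theta) *\<^sub>R estimate y0 t + theta *\<^sub>R snd (iterate y0 t)
     - (theta / \<mu>) *\<^sub>R G (snd (iterate y0 t))"

definition potential :: "'x \<Rightarrow> 'x \<Rightarrow> nat \<Rightarrow> real" where
  "potential y0 ys t = \<phi> (fst (iterate y0 t)) - \<phi> ys + \<mu> / 2 * (norm (estimate y0 t - ys))\<^sup>2"

lemma sqrt_kappa_gt_1: "sqrt_kappa > 1"
  unfolding sqrt_kappa_def using mu_pos mu_less_L by simp

lemma theta_bounds: "0 \<le> theta" "theta \<le> 1"
  unfolding theta_def using sqrt_kappa_gt_1 by simp_all

lemma L_eq: "L = sqrt_kappa * sqrt_kappa * \<mu>"
  unfolding sqrt_kappa_def using mu_pos mu_less_L by (simp add: real_sqrt_mult_self)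

lemma sqrt_kappa_nonzero:
  "sqrt_kappa \<noteq> 0" "sqrt_kappa + 1 \<noteq> 0" "sqrt_kappa + sqrt_kappa * sqrt_kappa \<noteq> 0"
  using sqrt_kappa_gt_1 by (simp_all, smt (verit) mult_pos_pos)

lemma one_minus_coupling: "1 - 1 / (sqrt_kappa + 1) = sqrt_kappa / (sqrt_kappa + 1)"
  using sqrt_kappa_nonzero by (simp add: field_simps)

lemma momentum_eq: "(1 - theta) * (1 - 1 / (sqrt_kappa + 1)) = momentum"
  unfolding one_minus_coupling theta_def momentum_def using sqrt_kappa_nonzero by (simp add: field_simps)

lemma momentum_step_eq: "1 / (sqrt_kappa + 1) * (1 / L - theta / \<mu>) = - (momentum / L)"
proof -
  obtain s where s: "sqrt_kappa = s" and L: "L = s * s * \<mu>" using L_eq by blast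
  have "s \<noteq> 0" "s + 1 \<noteq> 0" using sqrt_kappa_nonzero s by simp_all
  then show ?thesis unfolding theta_def momentum_def s using mu_pos
    by (simp add: L field_simps, simp add: minus_divide_left)
qed

lemma theta_coupling_eq: "theta * (1 - 1 / (sqrt_kappa + 1)) = 1 / (sqrt_kappa + 1)"
  unfolding one_minus_coupling theta_def using sqrt_kappa_nonzero by simp

lemma estimate_coupling:
  "snd (iterate y0 t) = fst (iterate y0 t) + (1 / (sqrt_kappa + 1)) *\<^sub>R (estimate y0 t - fst (iterate y0 t))"
proof (induction t)
  case 0
  show ?case by simp
next
  case (Suc t)
  define u y z where "u = fst (iterate y0 t)" and "y = snd (iterate y0 t)" and "z = estimate y0 t"
  define g w \<theta>' where "g = G y" and "w = z - u" and "\<theta>' = 1 / (sqrt_kappa + 1)"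
  have y: "y = u + \<theta>' *\<^sub>R w" using Suc unfolding u_def y_def z_def w_def \<theta>'_def .
  have "fst (iterate y0 (Suc t)) = y - (1 / L) *\<^sub>R g"
    unfolding agd_Suc Let_def y_def[symmetric] g_def[symmetric] by simp
  then have u': "fst (iterate y0 (Suc t)) = u + \<theta>' *\<^sub>R w - (1 / L) *\<^sub>R g"
    unfolding y .
  have y': "snd (iterate y0 (Suc t)) = fst (iterate y0 (Suc t)) + momentum *\<^sub>R (fst (iterate y0 (Suc t)) - u)"
    unfolding agd_Suc Let_def u_def by simp
  have "estimate y0 (Suc t) = (1 - theta) *\<^sub>R z + theta *\<^sub>R y - (theta / \<mu>) *\<^sub>R g"
    unfolding estimate.simps y_def[symmetric] g_def[symmetric] z_def[symmetric] ..
  then have z': "estimate y0 (Suc t) = (1 - theta) *\<^sub>R (u + w) + theta *\<^sub>R (u + \<theta>' *\<^sub>R w) - (theta / \<mu>) *\<^sub>R g"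
    unfolding y w_def by simp
  have "\<theta>' *\<^sub>R (estimate y0 (Suc t) - fst (iterate y0 (Suc t)))
      = (\<theta>' * ((1 - theta) * (1 - \<theta>'))) *\<^sub>R w + (\<theta>' * (1 / L - theta / \<mu>)) *\<^sub>R g"
    unfolding z' u' by (simp add: algebra_simps)
  also have "\<dots> = momentum *\<^sub>R (fst (iterate y0 (Suc t)) - u)"
    unfolding u' momentum_step_eq[folded \<theta>'_def] momentum_eq[folded \<theta>'_def] by (simp add: algebra_simps)
  finally show ?case unfolding y' \<theta>'_def by simp
qed

lemma theta_sq_eq: "\<mu> * (theta / \<mu>) * (theta / \<mu>) = 1 / L"
proof -
  obtain s where s: "sqrt_kappa = s" and L: "L = s * s * \<mu>" using L_eq by blast
  have "theta = 1 / s" unfolding theta_def s ..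
  then show ?thesis unfolding L using mu_pos by simp
qed

lemma estimate_Suc_dist:
  fixes y0 ys :: 'x and t :: nat
  defines "y \<equiv> snd (iterate y0 t)"
    and "P \<equiv> (1 - theta) *\<^sub>R (estimate y0 t - ys) + theta *\<^sub>R (snd (iterate y0 t) - ys)"
  shows "\<mu> / 2 * (norm (estimate y0 (Suc t) - ys))\<^sup>2
    = \<mu> / 2 * (norm P)\<^sup>2 - theta * (G y \<bullet> P) + (norm (G y))\<^sup>2 / (2 * L)"
proof -
  have expand: "(norm (Q - c *\<^sub>R h))\<^sup>2 = (norm Q)\<^sup>2 - 2 * c * (h \<bullet> Q) + c * c * (norm h)\<^sup>2"
    for Q h :: 'x and c :: real
    by (simp add: power2_norm_eq_inner inner_diff_left inner_diff_right inner_commute algebra_simps)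
  have "estimate y0 (Suc t) - ys = P - (theta / \<mu>) *\<^sub>R G y"
    unfolding P_def y_def by (simp add: algebra_simps)
  then have "(norm (estimate y0 (Suc t) - ys))\<^sup>2
      = (norm P)\<^sup>2 - 2 * (theta / \<mu>) * (G y \<bullet> P) + (theta / \<mu>) * (theta / \<mu>) * (norm (G y))\<^sup>2"
    by (simp only: expand)
  moreover have "\<mu> / 2 * (2 * (theta / \<mu>) * (G y \<bullet> P)) = theta * (G y \<bullet> P)"
    using mu_pos by simp
  moreover have "\<mu> / 2 * ((theta / \<mu>) * (theta / \<mu>) * (norm (G y))\<^sup>2)
      = (\<mu> * (theta / \<mu>) * (theta / \<mu>)) * (norm (G y))\<^sup>2 / 2"
    by (simp add: algebra_simps)
  moreover have "\<dots> = (norm (G y))\<^sup>2 / (2 * L)"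
    unfolding theta_sq_eq by simp
  ultimately show ?thesis by (simp add: right_diff_distrib distrib_left)
qed

lemma estimate_coupling_inner:
  fixes y0 ys g :: 'x and t :: nat
  defines "u \<equiv> fst (iterate y0 t)" and "y \<equiv> snd (iterate y0 t)" and "z \<equiv> estimate y0 t"
  shows "theta * (g \<bullet> (y - ys)) + (1 - theta) * (g \<bullet> (y - u))
    = theta * (g \<bullet> ((1 - theta) *\<^sub>R (z - ys) + theta *\<^sub>R (y - ys)))"
proof -
  define \<theta>' where "\<theta>' = 1 / (sqrt_kappa + 1)"
  have y: "y = u + \<theta>' *\<^sub>R (z - u)" unfolding u_def y_def z_def \<theta>'_def by (rule estimate_coupling)
  have "theta *\<^sub>R (y - ys) + (1 - theta) *\<^sub>R (y - u) - theta *\<^sub>R ((1 - theta) *\<^sub>R (z - ys) + theta *\<^sub>R (y - ys))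
      = ((1 - theta) * (\<theta>' - theta * (1 - \<theta>'))) *\<^sub>R (z - u)"
    unfolding y by (simp add: algebra_simps)
  also have "\<dots> = 0" unfolding \<theta>'_def by (simp add: theta_coupling_eq)
  finally have "g \<bullet> (theta *\<^sub>R (y - ys) + (1 - theta) *\<^sub>R (y - u)
      - theta *\<^sub>R ((1 - theta) *\<^sub>R (z - ys) + theta *\<^sub>R (y - ys))) = 0" by simp
  then show ?thesis by (simp add: inner_add_right inner_diff_right)
qed

lemma potential_contraction: "potential y0 ys (Suc t) \<le> (1 - theta) * potential y0 ys t"
proof -
  define u y z where "u = fst (iterate y0 t)" and "y = snd (iterate y0 t)" and "z = estimate y0 t"
  define g P where "g = G y" and "P = (1 - theta) *\<^sub>R (z - ys) + theta *\<^sub>R (y - ys)"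
  have step: "\<phi> (fst (iterate y0 (Suc t))) \<le> \<phi> y - (norm g)\<^sup>2 / (2 * L)"
    using gradient_step_decrease[of y] unfolding agd_Suc Let_def y_def g_def by simp
  have to_ys: "\<phi> y - g \<bullet> (y - ys) + \<mu> / 2 * (norm (y - ys))\<^sup>2 \<le> \<phi> ys"
    using first_order[of y ys] unfolding g_def by (simp add: inner_diff_right norm_minus_commute)
  have to_u: "\<phi> y - g \<bullet> (y - u) \<le> \<phi> u"
  proof -
    have "\<phi> y + g \<bullet> (u - y) + \<mu> / 2 * (norm (u - y))\<^sup>2 \<le> \<phi> u"
      using first_order[of y u] unfolding g_def .
    moreover have "0 \<le> \<mu> / 2 * (norm (u - y))\<^sup>2" using mu_pos by simp
    ultimately show ?thesis by (simp add: inner_diff_right)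
  qed
  have dist: "\<mu> / 2 * (norm (estimate y0 (Suc t) - ys))\<^sup>2 = \<mu> / 2 * (norm P)\<^sup>2 - theta * (g \<bullet> P) + (norm g)\<^sup>2 / (2 * L)"
    unfolding g_def P_def z_def y_def by (rule estimate_Suc_dist)
  have convex: "(norm P)\<^sup>2 \<le> (1 - theta) * (norm (z - ys))\<^sup>2 + theta * (norm (y - ys))\<^sup>2"
    unfolding P_def by (rule norm_convex_combination_sq_le[OF theta_bounds])
  have coupling: "theta * (g \<bullet> (y - ys)) + (1 - theta) * (g \<bullet> (y - u)) = theta * (g \<bullet> P)"
    unfolding u_def y_def P_def z_def by (rule estimate_coupling_inner)
  have "theta * \<phi> y - theta * (g \<bullet> (y - ys)) + theta * (\<mu> / 2 * (norm (y - ys))\<^sup>2) \<le> theta * \<phi> ys"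
    using mult_left_mono[OF to_ys theta_bounds(1)] by (simp add: algebra_simps)
  moreover have "(1 - theta) * \<phi> y - (1 - theta) * (g \<bullet> (y - u)) \<le> (1 - theta) * \<phi> u"
    using mult_left_mono[OF to_u, of "1 - theta"] theta_bounds by (simp add: algebra_simps)
  moreover have "\<mu> / 2 * (norm P)\<^sup>2 \<le> \<mu> / 2 * ((1 - theta) * (norm (z - ys))\<^sup>2) + \<mu> / 2 * (theta * (norm (y - ys))\<^sup>2)"
    using mult_left_mono[OF convex, of "\<mu> / 2"] mu_pos by (simp add: algebra_simps)
  ultimately show ?thesis
    using step dist coupling unfolding potential_def u_def[symmetric] z_def[symmetric]
    by (simp add: algebra_simps diff_divide_distrib add_divide_distrib)
qed

lemma potential_bound: "potential y0 ys T \<le> (1 - theta) ^ T * potential y0 ys 0"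
proof (induction T)
  case (Suc T)
  have "potential y0 ys (Suc T) \<le> (1 - theta) * potential y0 ys T" by (rule potential_contraction)
  also have "\<dots> \<le> (1 - theta) * ((1 - theta) ^ T * potential y0 ys 0)"
    using Suc theta_bounds by (intro mult_left_mono) auto
  finally show ?case by simp
qed simp

lemma agd_linear_convergence:
  assumes minimizer: "G ys = 0"
  shows "(norm (snd (iterate y0 T) - ys))\<^sup>2 \<le> (1 + L / \<mu>) * (1 - 1 / sqrt (L / \<mu>)) ^ T * (norm (y0 - ys))\<^sup>2"
proof -
  define U Z \<theta>' where "U = fst (iterate y0 T)" and "Z = estimate y0 T" and "\<theta>' = 1 / (sqrt_kappa + 1)"
  have \<theta>': "0 \<le> \<theta>'" "\<theta>' \<le> 1" unfolding \<theta>'_def using sqrt_kappa_gt_1 by simp_all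
  have pot0: "potential y0 ys 0 \<le> (L + \<mu>) / 2 * (norm (y0 - ys))\<^sup>2"
    using upper_quadratic[where p = ys and q = y0] minimizer
    unfolding potential_def by (simp add: algebra_simps add_divide_distrib)
  have U_close: "\<mu> / 2 * (norm (U - ys))\<^sup>2 \<le> \<phi> U - \<phi> ys"
    using first_order[where p = ys and q = U] minimizer by simp
  have "snd (iterate y0 T) - ys = (1 - \<theta>') *\<^sub>R (U - ys) + \<theta>' *\<^sub>R (Z - ys)"
    using estimate_coupling[of y0 T] unfolding U_def Z_def \<theta>'_def by (simp add: algebra_simps)
  then have "(norm (snd (iterate y0 T) - ys))\<^sup>2 \<le> (1 - \<theta>') * (norm (U - ys))\<^sup>2 + \<theta>' * (norm (Z - ys))\<^sup>2"
    using norm_convex_combination_sq_le[OF \<theta>'] by simp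
  also have "\<dots> \<le> (norm (U - ys))\<^sup>2 + (norm (Z - ys))\<^sup>2"
    using \<theta>' by (intro add_mono) (auto simp: mult_left_le_one_le mult_le_cancel_right1)
  also have "\<dots> \<le> 2 / \<mu> * potential y0 ys T"
    using U_close mu_pos unfolding potential_def U_def[symmetric] Z_def[symmetric] by (simp add: field_simps)
  also have "\<dots> \<le> 2 / \<mu> * ((1 - theta) ^ T * ((L + \<mu>) / 2 * (norm (y0 - ys))\<^sup>2))"
  proof -
    have "(1 - theta) ^ T * potential y0 ys 0 \<le> (1 - theta) ^ T * ((L + \<mu>) / 2 * (norm (y0 - ys))\<^sup>2)"
      using pot0 theta_bounds by (intro mult_left_mono) auto
    then show ?thesis using potential_bound[of y0 ys T] mu_pos by (intro mult_left_mono) auto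
  qed
  also have "\<dots> = (1 + L / \<mu>) * (1 - theta) ^ T * (norm (y0 - ys))\<^sup>2"
    using mu_pos by (simp add: field_simps)
  finally show ?thesis unfolding theta_def sqrt_kappa_def .
qed

end

section \<open>The lower-level solution map and the hypergradient\<close>

lemma norm_fst_diff_le: "norm (fst p - fst q) \<le> norm (p - q)"
  using norm_fst_le[of "fst p - fst q" "snd p - snd q"]
  unfolding fst_diff[symmetric] snd_diff[symmetric] prod.collapse .

lemma norm_snd_diff_le: "norm (snd p - snd q) \<le> norm (p - q)"
  using norm_snd_le[of "snd p - snd q" "fst p - fst q"]
  unfolding fst_diff[symmetric] snd_diff[symmetric] prod.collapse .

lemma Pair_has_derivative: "((\<lambda>y. (x, y)) has_derivative (\<lambda>w. (0, w))) (at y)"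
  by (auto intro!: derivative_eq_intros)

locale bilevel =
  fixes f g :: "'a::euclidean_space \<times> 'b::euclidean_space \<Rightarrow> real"
    and Df Dg :: "'a \<times> 'b \<Rightarrow> 'a \<times> 'b"
    and D2g :: "'a \<times> 'b \<Rightarrow> ('a \<times> 'b \<Rightarrow> 'b)"
    and mu L M tau rho :: real
  assumes f_deriv: "\<And>z. (f has_derivative (\<lambda>w. Df z \<bullet> w)) (at z)"
    and g_deriv: "\<And>z. (g has_derivative (\<lambda>w. Dg z \<bullet> w)) (at z)"
    and g_deriv2: "\<And>z. ((\<lambda>z. snd (Dg z)) has_derivative D2g z) (at z)"
    and mu_pos: "mu > 0"
    and g_sc: "\<And>x. strongly_convex_with mu (\<lambda>y. g (x, y))"
    and M_nonneg: "M \<ge> 0" and L_nonneg: "L \<ge> 0" and tau_nonneg: "tau \<ge> 0" and rho_nonneg: "rho \<ge> 0"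
    and f_lip: "\<And>z z'. \<bar>f z - f z'\<bar> \<le> M * norm (z - z')"
    and Df_lip: "\<And>z z'. norm (Df z - Df z') \<le> L * norm (z - z')"
    and Dg_lip: "\<And>z z'. norm (Dg z - Dg z') \<le> L * norm (z - z')"
    and Jac_lip: "\<And>z z' u. norm (D2g z (u, 0) - D2g z' (u, 0)) \<le> tau * norm (z - z') * norm u"
    and Hess_lip: "\<And>z z' v. norm (D2g z (0, v) - D2g z' (0, v)) \<le> rho * norm (z - z') * norm v"
begin

definition hess_y :: "'a \<times> 'b \<Rightarrow> 'b \<Rightarrow> 'b" where "hess_y z v = D2g z (0, v)"
definition jac_xy :: "'a \<times> 'b \<Rightarrow> 'a \<Rightarrow> 'b" where "jac_xy z u = D2g z (u, 0)"

lemma g_y_has_derivative: "((\<lambda>y. g (x, y)) has_derivative (\<lambda>w. snd (Dg (x, y)) \<bullet> w)) (at y)"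
  using has_derivative_compose[OF Pair_has_derivative g_deriv] by (simp add: inner_prod_def)

lemma grad_y_has_derivative: "((\<lambda>y. snd (Dg (x, y))) has_derivative hess_y (x, y)) (at y)"
  using has_derivative_compose[OF Pair_has_derivative g_deriv2] by (simp add: hess_y_def[abs_def])

lemma D2g_linear: "linear (D2g z)"
  using g_deriv2 has_derivative_linear by blast

lemma hess_y_linear: "linear (hess_y z)"
  using linear_compose[OF bounded_linear.linear[OF bounded_linear_Pair[OF bounded_linear_zero bounded_linear_ident]] D2g_linear]
  by (simp add: hess_y_def[abs_def] o_def id_def)

lemma jac_xy_linear: "linear (jac_xy z)"
  using linear_compose[OF bounded_linear.linear[OF bounded_linear_Pair[OF bounded_linear_ident bounded_linear_zero]] D2g_linear]
  by (simp add: jac_xy_def[abs_def] o_def id_def)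

lemma norm_D2g_le: "norm (D2g z w) \<le> L * norm w"
proof (rule has_derivative_norm_le_of_lipschitz[OF g_deriv2])
  fix a b :: "'a \<times> 'b"
  have "norm (snd (Dg a) - snd (Dg b)) \<le> norm (Dg a - Dg b)" by (rule norm_snd_diff_le)
  also have "\<dots> \<le> L * norm (a - b)" by (rule Dg_lip)
  finally show "norm (snd (Dg a) - snd (Dg b)) \<le> L * norm (a - b)" .
qed

lemma norm_jac_xy_le: "norm (jac_xy z u) \<le> L * norm u"
  unfolding jac_xy_def using norm_D2g_le[of z "(u, 0)"] by simp

lemma norm_Df_le: "norm (Df z) \<le> M"
proof -
  have "norm (Df z \<bullet> w) \<le> M * norm w" for w
    by (rule has_derivative_norm_le_of_lipschitz[OF f_deriv]) (simp add: f_lip)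
  from this[of "Df z"] have "norm (Df z) * norm (Df z) \<le> M * norm (Df z)"
    by (simp add: dot_square_norm power2_eq_square)
  then show ?thesis by (cases "norm (Df z) = 0") (auto simp: M_nonneg)
qed

lemma grad_y_lipschitz: "norm (snd (Dg (x, a)) - snd (Dg (x, b))) \<le> L * norm (a - b)"
  using norm_snd_diff_le[of "Dg (x, a)" "Dg (x, b)"] Dg_lip[of "(x, a)" "(x, b)"] by simp

lemma g_y_first_order: "g (x, y) + snd (Dg (x, y)) \<bullet> (y' - y) + mu / 2 * (norm (y' - y))\<^sup>2 \<le> g (x, y')"
  by (rule strongly_convex_with_first_order[OF g_sc g_y_has_derivative])

lemma grad_y_strongly_monotone:
  "mu * (norm (y1 - y2))\<^sup>2 \<le> (snd (Dg (x, y1)) - snd (Dg (x, y2))) \<bullet> (y1 - y2)"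
  by (rule strongly_convex_with_gradient_monotone[OF g_sc g_y_has_derivative g_y_has_derivative])

lemma hess_y_coercive: "mu * (norm v)\<^sup>2 \<le> hess_y z v \<bullet> v"
proof -
  have "mu * (norm v)\<^sup>2 \<le> hess_y (x, y) v \<bullet> v" for x y
    by (rule has_derivative_coercive_of_strongly_monotone[OF grad_y_has_derivative grad_y_strongly_monotone])
  from this[where x = "fst z" and y = "snd z"] show ?thesis by simp
qed

lemma norm_hess_y_ge: "mu * norm v \<le> norm (hess_y z v)"
proof -
  have "mu * norm v * norm v \<le> norm (hess_y z v) * norm v"
    using hess_y_coercive[of v z] norm_cauchy_schwarz[of "hess_y z v" v] by (simp add: power2_eq_square)
  then show ?thesis by (cases "v = 0") (simp_all add: mult_le_cancel_right_pos)
qed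

lemma lower_level_minimizer_exists: "\<exists>y. \<forall>y'. g (x, y) \<le> g (x, y')"
proof -
  define G0 where "G0 = snd (Dg (x, 0))"
  define R where "R = 2 * norm G0 / mu"
  have R: "R \<ge> 0" using mu_pos by (simp add: R_def)
  have outside: "g (x, 0) < g (x, y)" if "norm y > R" for y
  proof -
    have "2 * norm G0 < mu * norm y" using that mu_pos by (simp add: R_def pos_divide_less_eq mult.commute)
    moreover have "norm y > 0" using that R by linarith
    ultimately have "norm G0 * norm y < mu / 2 * (norm y)\<^sup>2"
      by (simp add: power2_eq_square mult_strict_right_mono[of "2 * norm G0" "mu * norm y" "norm y", simplified])
    moreover have "- (norm G0 * norm y) \<le> G0 \<bullet> y"
      using norm_cauchy_schwarz[of "-G0" y] by simp
    moreover have "g (x, 0) + G0 \<bullet> y + mu / 2 * (norm y)\<^sup>2 \<le> g (x, y)"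
      using g_y_first_order[of x 0 y] by (simp add: G0_def)
    ultimately show ?thesis by linarith
  qed
  have "continuous_on (cball 0 R) (\<lambda>y. g (x, y))"
    by (intro continuous_at_imp_continuous_on ballI has_derivative_continuous[OF g_y_has_derivative])
  moreover have "cball (0::'b) R \<noteq> {}" using R by simp
  ultimately obtain ym where ym: "\<And>y. y \<in> cball 0 R \<Longrightarrow> g (x, ym) \<le> g (x, y)"
    using continuous_attains_inf[OF compact_cball] by blast
  have "g (x, ym) \<le> g (x, y')" for y'
  proof (cases "norm y' \<le> R")
    case False
    then show ?thesis using outside[of y'] ym[of 0] R by simp
  qed (use ym in simp)
  then show ?thesis by blast
qed

lemma ystar_eqI:
  assumes "snd (Dg (x, y)) = 0"
  shows "ystar g x = y"
  unfolding ystar_def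
proof (rule the_equality)
  have quadratic_growth: "g (x, y) + mu / 2 * (norm (y' - y))\<^sup>2 \<le> g (x, y')" for y'
    using g_y_first_order[of x y y'] assms by simp
  show "\<forall>y'. g (x, y) \<le> g (x, y')"
  proof
    fix y'
    have "0 \<le> mu / 2 * (norm (y' - y))\<^sup>2" using mu_pos by simp
    then show "g (x, y) \<le> g (x, y')" using quadratic_growth[of y'] by linarith
  qed
  fix y2 assume "\<forall>y'. g (x, y2) \<le> g (x, y')"
  then have "g (x, y2) \<le> g (x, y)" by blast
  then have "mu / 2 * (norm (y2 - y))\<^sup>2 \<le> 0" using quadratic_growth[of y2] by linarith
  then show "y2 = y" using mu_pos by (simp add: mult_le_0_iff)
qed

lemma grad_y_ystar: "snd (Dg (x, ystar g x)) = 0"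
proof -
  obtain y where min: "\<forall>y'. g (x, y) \<le> g (x, y')" using lower_level_minimizer_exists by blast
  have "(\<lambda>w. snd (Dg (x, y)) \<bullet> w) = (\<lambda>w. 0)"
    by (rule differential_zero_maxmin[of y UNIV, OF UNIV_I open_UNIV g_y_has_derivative]) (use min in simp)
  then have "snd (Dg (x, y)) = 0" by (metis inner_eq_zero_iff)
  with ystar_eqI show ?thesis by simp
qed

lemma ystar_lipschitz: "norm (ystar g x - ystar g x') \<le> L / mu * norm (x - x')"
proof -
  define y1 y2 where "y1 = ystar g x" and "y2 = ystar g x'"
  have "mu * (norm (y1 - y2))\<^sup>2 \<le> (snd (Dg (x, y1)) - snd (Dg (x, y2))) \<bullet> (y1 - y2)"
    by (rule grad_y_strongly_monotone)
  also have "\<dots> = (snd (Dg (x', y2)) - snd (Dg (x, y2))) \<bullet> (y1 - y2)"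
    using grad_y_ystar unfolding y1_def y2_def by simp
  also have "\<dots> \<le> norm (snd (Dg (x', y2)) - snd (Dg (x, y2))) * norm (y1 - y2)"
    by (rule norm_cauchy_schwarz)
  also have "\<dots> \<le> norm (Dg (x', y2) - Dg (x, y2)) * norm (y1 - y2)"
    by (intro mult_right_mono norm_snd_diff_le) simp
  also have "\<dots> \<le> L * norm (x - x') * norm (y1 - y2)"
    using Dg_lip[of "(x', y2)" "(x, y2)"] by (simp add: mult_right_mono norm_minus_commute)
  finally have "mu * norm (y1 - y2) * norm (y1 - y2) \<le> L * norm (x - x') * norm (y1 - y2)"
    by (simp add: power2_eq_square mult.assoc)
  then have "mu * norm (y1 - y2) \<le> L * norm (x - x')"
    using L_nonneg by (cases "y1 = y2") (simp_all add: mult_le_cancel_right_pos)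
  then show ?thesis unfolding y1_def y2_def using mu_pos by (simp add: field_simps)
qed

lemma ystar_lipschitz_graph: "norm ((x', ystar g x') - (x, ystar g x)) \<le> (1 + L / mu) * norm (x' - x)"
proof -
  have "norm ((x', ystar g x') - (x, ystar g x)) \<le> norm (x' - x) + norm (ystar g x' - ystar g x)"
    using norm_Pair_le[of "x' - x" "ystar g x' - ystar g x"] by simp
  also have "\<dots> \<le> norm (x' - x) + L / mu * norm (x' - x)" using ystar_lipschitz by simp
  finally show ?thesis by (simp add: algebra_simps)
qed

lemma hess_y_inj: "inj (hess_y z)"
proof (rule injI)
  fix v w assume "hess_y z v = hess_y z w"
  then have "hess_y z (v - w) = 0" using linear_diff[OF hess_y_linear] by simp
  then show "v = w" using norm_hess_y_ge[of "v - w" z] mu_pos by (simp add: mult_le_0_iff)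
qed

definition hess_y_inv :: "'a \<times> 'b \<Rightarrow> 'b \<Rightarrow> 'b" where "hess_y_inv z = inv (hess_y z)"

lemma hess_y_hess_y_inv: "hess_y z (hess_y_inv z a) = a"
  unfolding hess_y_inv_def using linear_inj_imp_surj[OF hess_y_linear hess_y_inj] by (rule surj_f_inv_f)

lemma hess_y_inv_eqI: "hess_y z v = a \<Longrightarrow> hess_y_inv z a = v"
  unfolding hess_y_inv_def using hess_y_inj by (rule inv_f_eq)

lemma hess_y_inv_linear: "linear (hess_y_inv z)"
  unfolding hess_y_inv_def by (rule inj_linear_imp_inv_linear[OF hess_y_linear hess_y_inj])

lemma norm_hess_y_inv_le: "mu * norm (hess_y_inv z a) \<le> norm a"
  using norm_hess_y_ge[of "hess_y_inv z a" z] by (simp add: hess_y_hess_y_inv)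

lemma hess_y_symmetric: "hess_y z v \<bullet> w = v \<bullet> hess_y z w"
proof -
  have "hess_y (x, y) v \<bullet> w = hess_y (x, y) w \<bullet> v" for x y
  proof (rule hessian_symmetric[OF g_y_has_derivative grad_y_has_derivative _ rho_nonneg])
    fix p q :: 'b and u
    show "norm (hess_y (x, p) u - hess_y (x, q) u) \<le> rho * norm (p - q) * norm u"
      using Hess_lip[where z = "(x, p)" and z' = "(x, q)" and v = u] unfolding hess_y_def by simp
  qed
  from this[where x = "fst z" and y = "snd z"] show ?thesis by (simp add: inner_commute)
qed

text \<open>\<open>hyper_v z\<close> is the solution \<open>v\<close> of \<open>\<nabla>\<^sub>y\<^sup>2 g(z) v = \<nabla>\<^sub>y f(z)\<close>, and \<open>hypergrad z\<close> is the
  hypergradient estimate \<open>\<nabla>\<^sub>x f(z) - \<nabla>\<^sub>x\<nabla>\<^sub>y g(z) v\<close> that PBA evaluates at \<open>z = (x\<^sub>k, y\<^sub>k\<^sub>+\<^sub>1)\<close>.\<close>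

definition hyper_v :: "'a \<times> 'b \<Rightarrow> 'b" where "hyper_v z = hess_y_inv z (snd (Df z))"

definition hypergrad :: "'a \<times> 'b \<Rightarrow> 'a" where
  "hypergrad z = fst (Df z) - adjoint (jac_xy z) (hyper_v z)"

definition L_hyper :: real where "L_hyper = L + L * L / mu + L * rho * M / mu\<^sup>2 + tau * M / mu"

lemma L_hyper_ge: "L_hyper \<ge> L"
  unfolding L_hyper_def using L_nonneg mu_pos rho_nonneg M_nonneg tau_nonneg by simp

lemma norm_hyper_v_le: "norm (hyper_v z) \<le> M / mu"
proof -
  have "mu * norm (hyper_v z) \<le> M"
    using norm_hess_y_inv_le[of z "snd (Df z)"] norm_Df_le[of z] norm_snd_diff_le[of "Df z" 0]
    unfolding hyper_v_def by simp
  then show ?thesis using mu_pos by (simp add: field_simps)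
qed

lemma hyper_v_lipschitz: "norm (hyper_v z - hyper_v z') \<le> (L + rho * M / mu) / mu * norm (z - z')"
proof -
  define v v' where "v = hyper_v z" and "v' = hyper_v z'"
  have "hess_y z v = snd (Df z)" "hess_y z' v' = snd (Df z')"
    unfolding v_def v'_def hyper_v_def by (simp_all add: hess_y_hess_y_inv)
  then have eq: "hess_y z (v - v') = (snd (Df z) - snd (Df z')) + (hess_y z' v' - hess_y z v')"
    by (simp add: linear_diff[OF hess_y_linear])
  have "norm (snd (Df z) - snd (Df z')) \<le> L * norm (z - z')"
    using norm_snd_diff_le[of "Df z" "Df z'"] Df_lip[of z z'] by linarith
  moreover have "norm (hess_y z' v' - hess_y z v') \<le> rho * norm (z - z') * (M / mu)"
  proof -
    have "norm (hess_y z' v' - hess_y z v') \<le> rho * norm (z - z') * norm v'"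
      using Hess_lip[where z = z' and z' = z and v = v'] unfolding hess_y_def by (simp add: norm_minus_commute)
    also have "\<dots> \<le> rho * norm (z - z') * (M / mu)"
      unfolding v'_def using norm_hyper_v_le rho_nonneg by (intro mult_left_mono) simp_all
    finally show ?thesis .
  qed
  ultimately have "norm (hess_y z (v - v')) \<le> L * norm (z - z') + rho * norm (z - z') * (M / mu)"
    unfolding eq using norm_triangle_ineq[of "snd (Df z) - snd (Df z')" "hess_y z' v' - hess_y z v'"]
    by linarith
  then have "mu * norm (v - v') \<le> L * norm (z - z') + rho * norm (z - z') * (M / mu)"
    using norm_hess_y_ge[of "v - v'" z] by linarith
  then show ?thesis unfolding v_def v'_def using mu_pos by (simp add: field_simps)
qed

lemma hypergrad_lipschitz: "norm (hypergrad z - hypergrad z') \<le> L_hyper * norm (z - z')"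
proof -
  define v v' where "v = hyper_v z" and "v' = hyper_v z'"
  have split: "hypergrad z - hypergrad z'
      = (fst (Df z) - fst (Df z')) - adjoint (jac_xy z) (v - v') - adjoint (\<lambda>u. jac_xy z u - jac_xy z' u) v'"
    unfolding hypergrad_def v_def v'_def
    by (simp add: adjoint_diff jac_xy_linear linear_diff[OF adjoint_linear[OF jac_xy_linear]] algebra_simps)
  have "norm (fst (Df z) - fst (Df z')) \<le> L * norm (z - z')"
    using norm_fst_diff_le[of "Df z" "Df z'"] Df_lip[of z z'] by linarith
  moreover have "norm (adjoint (jac_xy z) (v - v')) \<le> L * ((L + rho * M / mu) / mu * norm (z - z'))"
  proof -
    have "norm (adjoint (jac_xy z) (v - v')) \<le> L * norm (v - v')"
      by (rule norm_adjoint_le[OF jac_xy_linear norm_jac_xy_le L_nonneg])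
    also have "\<dots> \<le> L * ((L + rho * M / mu) / mu * norm (z - z'))"
      unfolding v_def v'_def using hyper_v_lipschitz L_nonneg by (rule mult_left_mono)
    finally show ?thesis .
  qed
  moreover have "norm (adjoint (\<lambda>u. jac_xy z u - jac_xy z' u) v') \<le> tau * norm (z - z') * (M / mu)"
  proof -
    have "norm (adjoint (\<lambda>u. jac_xy z u - jac_xy z' u) v') \<le> (tau * norm (z - z')) * norm v'"
      by (rule norm_adjoint_le[OF linear_compose_sub[OF jac_xy_linear jac_xy_linear]])
        (simp_all add: jac_xy_def Jac_lip tau_nonneg)
    also have "\<dots> \<le> tau * norm (z - z') * (M / mu)"
      unfolding v'_def using norm_hyper_v_le tau_nonneg by (intro mult_left_mono) simp_all
    finally show ?thesis .
  qed
  ultimately have "norm (hypergrad z - hypergrad z')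
      \<le> L * norm (z - z') + L * ((L + rho * M / mu) / mu * norm (z - z')) + tau * norm (z - z') * (M / mu)"
    unfolding split by (smt (verit) norm_triangle_ineq4)
  also have "\<dots> = L_hyper * norm (z - z')"
    unfolding L_hyper_def using mu_pos by (simp add: field_simps power2_eq_square)
  finally show ?thesis .
qed

text \<open>Implicit function theorem for \<open>y*\<close>, proved directly: \<open>y*\<close> is Lipschitz and
  \<open>\<nabla>\<^sub>y g(x, y*(x)) = 0\<close>, so linearising \<open>\<nabla>\<^sub>y g\<close> at \<open>(x, y*(x))\<close> gives the derivative.\<close>

definition ystar_deriv :: "'a \<Rightarrow> 'a \<Rightarrow> 'b" where
  "ystar_deriv x u = - hess_y_inv (x, ystar g x) (jac_xy (x, ystar g x) u)"

lemma ystar_deriv_linear: "linear (ystar_deriv x)"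
  unfolding ystar_deriv_def
  using linear_compose[OF jac_xy_linear hess_y_inv_linear] by (simp add: o_def linear_compose_neg)

lemma hess_y_ystar_deriv: "hess_y (x, ystar g x) (ystar_deriv x u) = - jac_xy (x, ystar g x) u"
  unfolding ystar_deriv_def by (simp add: linear_neg[OF hess_y_linear] hess_y_hess_y_inv)

lemma ystar_has_derivative: "(ystar g has_derivative ystar_deriv x) (at x)"
  unfolding has_derivative_at_alt
proof (intro conjI allI impI)
  show "bounded_linear (ystar_deriv x)" using ystar_deriv_linear linear_conv_bounded_linear by blast
  fix e :: real assume e: "e > 0"
  define z where "z = (x, ystar g x)"
  define c where "c = 1 + L / mu"
  have c: "c > 0" unfolding c_def using L_nonneg mu_pos by (simp add: add_pos_nonneg)
  have "e * mu / c > 0" using e mu_pos c by simp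
  then obtain d where d: "d > 0" and lin: "\<And>z'. norm (z' - z) < d \<Longrightarrow>
      norm (snd (Dg z') - snd (Dg z) - D2g z (z' - z)) \<le> e * mu / c * norm (z' - z)"
    using g_deriv2[of z] unfolding has_derivative_at_alt by blast
  show "\<exists>d>0. \<forall>x'. norm (x' - x) < d \<longrightarrow> norm (ystar g x' - ystar g x - ystar_deriv x (x' - x)) \<le> e * norm (x' - x)"
  proof (intro exI[of _ "d / c"] conjI allI impI)
    show "d / c > 0" using d c by simp
    fix x' assume x': "norm (x' - x) < d / c"
    define z' dx dy where "z' = (x', ystar g x')" and "dx = x' - x" and "dy = ystar g x' - ystar g x"
    have close: "norm (z' - z) \<le> c * norm dx"
      unfolding z'_def z_def c_def dx_def by (rule ystar_lipschitz_graph)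
    also have "\<dots> < d" using x' c unfolding dx_def by (simp add: field_simps)
    finally have "norm (snd (Dg z') - snd (Dg z) - D2g z (z' - z)) \<le> e * mu / c * norm (z' - z)"
      by (rule lin)
    moreover have "snd (Dg z') = 0" "snd (Dg z) = 0" unfolding z'_def z_def by (simp_all add: grad_y_ystar)
    moreover have "D2g z (z' - z) = hess_y z (dy - ystar_deriv x dx)"
    proof -
      have "z' - z = (dx, 0) + (0, dy)" unfolding z'_def z_def dx_def dy_def by simp
      then have "D2g z (z' - z) = jac_xy z dx + hess_y z dy"
        unfolding jac_xy_def hess_y_def by (simp only: linear_add[OF D2g_linear])
      then show ?thesis using hess_y_ystar_deriv[of x dx] unfolding z_def by (simp add: linear_diff[OF hess_y_linear])
    qed
    ultimately have "norm (hess_y z (dy - ystar_deriv x dx)) \<le> e * mu / c * norm (z' - z)" by simp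
    also have "\<dots> \<le> e * mu / c * (c * norm dx)"
      using close e mu_pos c by (intro mult_left_mono) simp_all
    finally have "mu * norm (dy - ystar_deriv x dx) \<le> e * mu / c * (c * norm dx)"
      using norm_hess_y_ge[of "dy - ystar_deriv x dx" z] by linarith
    then show "norm (ystar g x' - ystar g x - ystar_deriv x (x' - x)) \<le> e * norm (x' - x)"
      using mu_pos c unfolding dx_def dy_def by (simp add: field_simps)
  qed
qed

definition grad_Phi :: "'a \<Rightarrow> 'a" where "grad_Phi x = hypergrad (x, ystar g x)"

lemma Phi_has_derivative: "(Phi f g has_derivative (\<lambda>u. grad_Phi x \<bullet> u)) (at x)"
proof -
  define z where "z = (x, ystar g x)"
  have "((\<lambda>x. (x, ystar g x)) has_derivative (\<lambda>u. (u, ystar_deriv x u))) (at x)"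
    by (rule has_derivative_Pair[OF has_derivative_ident ystar_has_derivative])
  from has_derivative_compose[OF this f_deriv]
  have chain: "(Phi f g has_derivative (\<lambda>u. Df z \<bullet> (u, ystar_deriv x u))) (at x)"
    unfolding z_def Phi_def[abs_def] .
  have "Df z \<bullet> (u, ystar_deriv x u) = grad_Phi x \<bullet> u" for u
  proof -
    have "snd (Df z) \<bullet> ystar_deriv x u = hess_y z (hyper_v z) \<bullet> ystar_deriv x u"
      unfolding hyper_v_def hess_y_hess_y_inv ..
    also have "\<dots> = hyper_v z \<bullet> hess_y z (ystar_deriv x u)" by (rule hess_y_symmetric)
    also have "\<dots> = - (adjoint (jac_xy z) (hyper_v z) \<bullet> u)"
      unfolding z_def hess_y_ystar_deriv by (simp add: adjoint_clauses[OF jac_xy_linear] inner_commute)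
    finally show ?thesis
      unfolding grad_Phi_def hypergrad_def z_def[symmetric] by (simp add: inner_prod_def inner_diff_left)
  qed
  then show ?thesis using chain by simp
qed

lemma grad_Phi_lipschitz: "norm (grad_Phi x - grad_Phi x') \<le> L_hyper * (1 + L / mu) * norm (x - x')"
proof -
  have "norm (grad_Phi x - grad_Phi x') \<le> L_hyper * norm ((x, ystar g x) - (x', ystar g x'))"
    unfolding grad_Phi_def by (rule hypergrad_lipschitz)
  also have "\<dots> \<le> L_hyper * ((1 + L / mu) * norm (x - x'))"
    using ystar_lipschitz_graph[of x x'] L_hyper_ge L_nonneg by (intro mult_left_mono) auto
  finally show ?thesis by simp
qed

lemma Phi_descent:
  "Phi f g x' \<le> Phi f g x + grad_Phi x \<bullet> (x' - x) + L_hyper * (1 + L / mu) / 2 * (norm (x' - x))\<^sup>2"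
  by (rule descent_lemma[OF Phi_has_derivative grad_Phi_lipschitz])

lemma grad_Phi_continuous: "continuous_on UNIV grad_Phi"
  using L_hyper_ge L_nonneg mu_pos
  by (intro lipschitz_on_continuous_on[of "L_hyper * (1 + L / mu)"] lipschitz_onI)
    (auto simp: dist_norm grad_Phi_lipschitz)

end

section \<open>Limit points and Frechet subgradients\<close>

lemma limit_points_frequently_near:
  fixes s :: "nat \<Rightarrow> 'a::metric_space"
  assumes "p \<in> limit_points s"
  shows "\<forall>e>0. \<forall>N. \<exists>n\<ge>N. dist (s n) p < e"
proof (intro allI impI)
  fix e :: real and N assume "e > 0"
  obtain r where r: "strict_mono r" and lim: "(s \<circ> r) \<longlonglongrightarrow> p"
    using assms unfolding limit_points_def by blast
  obtain M where "\<And>n. n \<ge> M \<Longrightarrow> dist ((s \<circ> r) n) p < e" using metric_LIMSEQ_D[OF lim \<open>e > 0\<close>] by blast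
  then show "\<exists>n\<ge>N. dist (s n) p < e"
    using seq_suble[OF r, of "max M N"] by (intro exI[of _ "r (max M N)"]) auto
qed

lemma limit_pointsI_frequently_near:
  fixes s :: "nat \<Rightarrow> 'a::metric_space"
  assumes frequent: "\<forall>e>0. \<forall>N. \<exists>n\<ge>N. dist (s n) p < e"
  shows "p \<in> limit_points s"
proof -
  define next_near where "next_near N e = (SOME n. N \<le> n \<and> dist (s n) p < e)" for N e
  have near: "N \<le> next_near N e \<and> dist (s (next_near N e)) p < e" if "e > 0" for N e
  proof -
    have "\<exists>n. N \<le> n \<and> dist (s n) p < e" using frequent that by blast
    then show ?thesis unfolding next_near_def by (rule someI_ex)
  qed
  define r where "r = rec_nat (next_near 0 1) (\<lambda>k m. next_near (Suc m) (1 / (real k + 2)))"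
  have r_Suc: "r (Suc k) = next_near (Suc (r k)) (1 / (real k + 2))" for k
    unfolding r_def by simp
  have "r k < r (Suc k)" for k
    using near[of "1 / (real k + 2)" "Suc (r k)"] unfolding r_Suc by simp
  then have "strict_mono r" by (rule strict_mono_Suc_iff[THEN iffD2, rule_format])
  moreover have close: "dist (s (r k)) p < 1 / (real k + 1)" for k
  proof (cases k)
    case 0
    then show ?thesis using near[of 1 0] by (simp add: r_def)
  next
    case (Suc j)
    then show ?thesis using near[of "1 / (real j + 2)" "Suc (r j)"] by (simp add: r_Suc add.commute)
  qed
  have "(s \<circ> r) \<longlonglongrightarrow> p"
  proof (rule tendsto_sandwich[THEN iffD2[OF tendsto_dist_iff]])
    show "\<forall>\<^sub>F k in sequentially. 0 \<le> dist ((s \<circ> r) k) p" by simp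
    show "\<forall>\<^sub>F k in sequentially. dist ((s \<circ> r) k) p \<le> 1 / (real k + 1)"
      using close by (simp add: less_imp_le)
    show "(\<lambda>k. 1 / (real k + 1)) \<longlonglongrightarrow> 0" using LIMSEQ_inverse_real_of_nat
      by (simp add: inverse_eq_divide add.commute)
  qed simp
  ultimately show "p \<in> limit_points s" unfolding limit_points_def by blast
qed

lemma limit_points_iff:
  fixes s :: "nat \<Rightarrow> 'a::metric_space"
  shows "p \<in> limit_points s \<longleftrightarrow> (\<forall>e>0. \<forall>N. \<exists>n\<ge>N. dist (s n) p < e)"
  using limit_points_frequently_near limit_pointsI_frequently_near by blast

lemma limit_points_eq_INT_closure:
  fixes s :: "nat \<Rightarrow> 'a::metric_space"
  shows "limit_points s = (\<Inter>N. closure (s ` {N..}))"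
proof (rule set_eqI)
  fix p
  have "p \<in> closure (s ` {N..}) \<longleftrightarrow> (\<forall>e>0. \<exists>n\<ge>N. dist (s n) p < e)" for N
    unfolding closure_approachable by auto
  then show "p \<in> limit_points s \<longleftrightarrow> p \<in> (\<Inter>N. closure (s ` {N..}))"
    unfolding limit_points_iff by auto
qed

lemma compact_limit_points:
  fixes s :: "nat \<Rightarrow> 'a::heine_borel"
  assumes "bounded (range s)"
  shows "compact (limit_points s)"
proof -
  have "limit_points s \<subseteq> closure (s ` {0..})"
    unfolding limit_points_eq_INT_closure by blast
  then have "limit_points s \<subseteq> closure (range s)" by simp
  then have "bounded (limit_points s)"
    using assms bounded_closure bounded_subset by blast
  then show ?thesis
    unfolding compact_eq_bounded_closed limit_points_eq_INT_closure by auto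
qed

lemma frechet_subdiff_add_quadratic_minorant:
  fixes \<Phi> :: "'a::euclidean_space \<Rightarrow> real" and h :: "'a \<Rightarrow> ereal"
  assumes der: "(\<Phi> has_derivative (\<lambda>w. G \<bullet> w)) (at x)"
    and hx: "h x = ereal hx"
    and minorant: "\<And>z. ereal (hx + q \<bullet> (z - x) - c * (norm (z - x))\<^sup>2) \<le> h z"
  shows "G + q \<in> frechet_subdiff (\<lambda>z. ereal (\<Phi> z) + h z) x"
proof -
  define r where "r z = (\<Phi> z - \<Phi> x - G \<bullet> (z - x)) / norm (z - x) - c * norm (z - x)" for z
  have "((\<lambda>z. \<bar>(\<Phi> z - \<Phi> x - G \<bullet> (z - x)) / norm (z - x)\<bar>) \<longlongrightarrow> 0) (at x)"
    using der unfolding has_derivative_iff_norm by (simp add: abs_divide)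
  then have "((\<lambda>z. (\<Phi> z - \<Phi> x - G \<bullet> (z - x)) / norm (z - x)) \<longlongrightarrow> 0) (at x)"
    by (rule tendsto_rabs_zero_cancel)
  moreover have "((\<lambda>z. norm (z - x)) \<longlongrightarrow> 0) (at x)"
    using tendsto_norm[OF LIM_zero[OF tendsto_ident_at]] by simp
  ultimately have "(r \<longlongrightarrow> 0 - c * 0) (at x)" unfolding r_def by (intro tendsto_intros)
  then have Liminf_r: "Liminf (at x) (\<lambda>z. ereal (r z)) = 0"
    by (intro lim_imp_Liminf) (simp_all add: zero_ereal_def tendsto_ereal)
  have "\<forall>\<^sub>F z in at x. ereal (r z) \<le> (ereal (\<Phi> z) + h z - (ereal (\<Phi> x) + h x)
      - ereal ((G + q) \<bullet> (z - x))) / ereal (norm (z - x))"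
    unfolding eventually_at_filter
  proof (intro always_eventually allI impI)
    fix z assume "z \<noteq> x"
    then have n: "norm (z - x) > 0" by simp
    show "ereal (r z) \<le> (ereal (\<Phi> z) + h z - (ereal (\<Phi> x) + h x) - ereal ((G + q) \<bullet> (z - x)))
      / ereal (norm (z - x))"
    proof (cases "h z")
      case (real hz)
      have "hx + q \<bullet> (z - x) - c * (norm (z - x))\<^sup>2 \<le> hz" using minorant[of z] real by simp
      moreover have "r z * norm (z - x) = \<Phi> z - \<Phi> x - G \<bullet> (z - x) - c * (norm (z - x))\<^sup>2"
        using n unfolding r_def by (simp add: field_simps power2_eq_square)
      ultimately have "r z * norm (z - x) \<le> \<Phi> z + hz - (\<Phi> x + hx) - (G + q) \<bullet> (z - x)"
        by (simp add: inner_add_left)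
      then show ?thesis using real hx n by (simp add: pos_le_divide_eq)
    next
      case PInf
      then show ?thesis using hx n by simp
    next
      case MInf
      then show ?thesis using minorant[of z] by simp
    qed
  qed
  from Liminf_mono[OF this] have "0 \<le> Liminf (at x) (\<lambda>z. (ereal (\<Phi> z) + h z - (ereal (\<Phi> x) + h x)
      - ereal ((G + q) \<bullet> (z - x))) / ereal (norm (z - x)))"
    unfolding Liminf_r .
  then show ?thesis unfolding frechet_subdiff_def using hx by simp
qed

lemma lsc_le_lim:
  fixes h :: "'a::metric_space \<Rightarrow> ereal"
  assumes lsc: "lsc h" and s: "s \<longlonglongrightarrow> x" and a: "\<And>j. h (s j) = ereal (a j)" and lim: "a \<longlonglongrightarrow> l"
  shows "h x \<le> ereal l"
proof (rule ccontr)
  assume "\<not> h x \<le> ereal l"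
  then have "ereal l < h x" by simp
  then obtain c where c1: "ereal l < ereal c" and c2: "ereal c < h x" using ereal_dense2 by blast
  have "h x \<le> Liminf (at x) h" using lsc unfolding lsc_def by blast
  then have "eventually (\<lambda>z. ereal c < h z) (at x)" using c2 unfolding le_Liminf_iff by blast
  then obtain d where d: "d > 0" and above: "\<And>z. z \<noteq> x \<Longrightarrow> dist z x < d \<Longrightarrow> ereal c < h z"
    unfolding eventually_at by auto
  obtain N where N: "\<And>j. j \<ge> N \<Longrightarrow> dist (s j) x < d" using metric_LIMSEQ_D[OF s d] by blast
  have "ereal c < h (s j)" if "j \<ge> N" for j
    using above[of "s j"] c2 N[OF that] by (cases "s j = x") auto
  then have "\<forall>j\<ge>N. c \<le> a j" unfolding a by (simp add: less_imp_le)
  then have "c \<le> l" using LIMSEQ_le_const[OF lim] by blast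
  then show False using c1 by simp
qed

lemma tendsto_zero_of_square_le:
  fixes x w :: "nat \<Rightarrow> real"
  assumes c: "c > 0" and nonneg: "\<And>j. x j \<ge> 0" and le: "\<And>j. c * (x j)\<^sup>2 \<le> w j" and w: "w \<longlonglongrightarrow> 0"
  shows "x \<longlonglongrightarrow> 0"
proof (rule tendsto_sandwich[where f = "\<lambda>_. 0" and h = "\<lambda>j. sqrt (w j / c)"])
  show "\<forall>\<^sub>F n in sequentially. x n \<le> sqrt (w n / c)"
    using le c by (intro always_eventually allI real_le_rsqrt) (simp add: field_simps)
  have "(\<lambda>j. sqrt (w j / c)) \<longlonglongrightarrow> sqrt (0 / c)" by (intro tendsto_intros w) (use c in auto)
  then show "(\<lambda>j. sqrt (w j / c)) \<longlonglongrightarrow> 0" by simp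
qed (use nonneg in auto)

section \<open>Convergence of PBA\<close>

text \<open>PBA with an arbitrary inner solver that contracts the squared tracking error by the factor 1/8;
  the accelerated inner loop with the step count of the theorem is one such solver.\<close>

locale pba_iteration = bilevel +
  fixes h :: "'a \<Rightarrow> ereal" and beta :: real and xs :: "nat \<Rightarrow> 'a" and ys :: "nat \<Rightarrow> 'b"
  assumes h_range: "\<And>x. h x \<noteq> - \<infinity>" and h_proper: "\<exists>x. h x \<noteq> \<infinity>" and h_lsc: "lsc h"
    and bdd_below: "\<exists>c::real. \<forall>x. ereal c \<le> ereal (Phi f g x) + h x"
    and bdd_sublevel: "\<And>c::real. bounded {x. ereal (Phi f g x) + h x \<le> ereal c}"
    and mu_less_L: "mu < L" and beta_pos: "0 < beta"
    and beta_small: "L_hyper * (1 + L / mu) / 2 + L_hyper * (L / mu) + L \<le> 1 / (2 * beta)"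
    and inner_contraction: "\<And>k. (norm (ys (Suc k) - ystar g (xs k)))\<^sup>2 \<le> (norm (ys k - ystar g (xs k)))\<^sup>2 / 8"
    and prox_step: "\<And>k. xs (Suc k) \<in> prox beta h (xs k - beta *\<^sub>R hypergrad (xs k, ys (Suc k)))"
begin

definition objective :: "'a \<Rightarrow> ereal" where "objective x = ereal (Phi f g x) + h x"

definition grad_est :: "nat \<Rightarrow> 'a" where "grad_est k = hypergrad (xs k, ys (Suc k))"
definition prox_center :: "nat \<Rightarrow> 'a" where "prox_center k = xs k - beta *\<^sub>R grad_est k"
definition dx :: "nat \<Rightarrow> 'a" where "dx k = xs (Suc k) - xs k"
definition track_err :: "nat \<Rightarrow> real" where "track_err k = norm (ys k - ystar g (xs k))"
definition inner_err :: "nat \<Rightarrow> real" where "inner_err k = norm (ys (Suc k) - ystar g (xs k))"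

text \<open>\<open>h (xs 0)\<close> may be infinite, so \<open>h_val 0\<close> and \<open>obj_val 0\<close> are junk values;
  all statements about them are restricted to indices \<open>k \<ge> 1\<close>.\<close>

definition h_val :: "nat \<Rightarrow> real" where "h_val k = real_of_ereal (h (xs k))"
definition obj_val :: "nat \<Rightarrow> real" where "obj_val k = Phi f g (xs k) + h_val k"

text \<open>The weight makes the error \<open>L/mu \<parallel>dx k\<parallel>\<close> that an outer step adds to the tracking error
  cost no more than the sufficient decrease of the objective can pay for.\<close>

definition lyap_weight :: real where "lyap_weight = L_hyper / (4 * (L / mu))"
definition lyap :: "nat \<Rightarrow> real" where "lyap k = obj_val k + lyap_weight * (track_err k)\<^sup>2"

lemma L_pos: "L > 0" using mu_less_L mu_pos by simp
lemma kappa_gt_1: "L / mu > 1" using mu_less_L mu_pos by simp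
lemma L_hyper_pos: "L_hyper > 0" using L_hyper_ge L_pos by simp

lemma prox_optimality:
  "ereal beta * h (xs (Suc k)) + ereal ((norm (xs (Suc k) - prox_center k))\<^sup>2 / 2)
     \<le> ereal beta * h w + ereal ((norm (w - prox_center k))\<^sup>2 / 2)"
  using prox_step[of k] unfolding prox_def prox_center_def grad_est_def by blast

lemma h_finite: "h (xs (Suc k)) = ereal (h_val (Suc k))"
proof -
  obtain w a where a: "h w = ereal a" using h_proper h_range by (metis ereal_cases)
  have "h (xs (Suc k)) \<noteq> \<infinity>"
  proof
    assume "h (xs (Suc k)) = \<infinity>"
    then have "\<infinity> \<le> ereal beta * h w + ereal ((norm (w - prox_center k))\<^sup>2 / 2)"
      using prox_optimality[of k w] beta_pos by simp
    then show False using a by simp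
  qed
  with h_range[of "xs (Suc k)"] show ?thesis unfolding h_val_def by (cases "h (xs (Suc k))") simp_all
qed

lemma prox_optimality_real:
  assumes "h w = ereal hw"
  shows "beta * h_val (Suc k) + (norm (xs (Suc k) - prox_center k))\<^sup>2 / 2 \<le> beta * hw + (norm (w - prox_center k))\<^sup>2 / 2"
  using prox_optimality[of k w] unfolding h_finite assms by simp

lemma h_descent:
  assumes "k \<ge> 1"
  shows "h_val (Suc k) \<le> h_val k - grad_est k \<bullet> dx k - (norm (dx k))\<^sup>2 / (2 * beta)"
proof -
  obtain k' where k': "k = Suc k'" using assms by (cases k) simp_all
  have "beta * h_val (Suc k) + (norm (xs (Suc k) - prox_center k))\<^sup>2 / 2
      \<le> beta * h_val k + (norm (xs k - prox_center k))\<^sup>2 / 2"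
    by (rule prox_optimality_real) (simp add: k' h_finite)
  moreover have "xs (Suc k) - prox_center k = dx k + beta *\<^sub>R grad_est k" "xs k - prox_center k = beta *\<^sub>R grad_est k"
    unfolding prox_center_def dx_def by simp_all
  moreover have "(norm (dx k + beta *\<^sub>R grad_est k))\<^sup>2
      = (norm (dx k))\<^sup>2 + 2 * beta * (grad_est k \<bullet> dx k) + (norm (beta *\<^sub>R grad_est k))\<^sup>2"
    unfolding power2_norm_eq_inner by (simp add: inner_add_left inner_add_right inner_commute algebra_simps)
  ultimately have "beta * (h_val (Suc k) + (norm (dx k))\<^sup>2 / (2 * beta) + grad_est k \<bullet> dx k) \<le> beta * h_val k"
    using beta_pos by (simp add: algebra_simps add_divide_distrib)
  then show ?thesis using beta_pos by (simp add: mult_le_cancel_left_pos)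
qed

lemma grad_est_error: "norm (grad_est k - grad_Phi (xs k)) \<le> L_hyper * inner_err k"
  using hypergrad_lipschitz[of "(xs k, ys (Suc k))" "(xs k, ystar g (xs k))"]
  unfolding grad_est_def grad_Phi_def inner_err_def by simp

lemma obj_descent:
  assumes "k \<ge> 1"
  shows "obj_val (Suc k) \<le> obj_val k + L_hyper * inner_err k * norm (dx k)
    - (1 / (2 * beta) - L_hyper * (1 + L / mu) / 2) * (norm (dx k))\<^sup>2"
proof -
  have "grad_Phi (xs k) \<bullet> dx k - grad_est k \<bullet> dx k \<le> norm (grad_Phi (xs k) - grad_est k) * norm (dx k)"
    unfolding inner_diff_left[symmetric] by (rule norm_cauchy_schwarz)
  also have "\<dots> \<le> L_hyper * inner_err k * norm (dx k)"
    using grad_est_error[of k] by (simp add: norm_minus_commute mult_right_mono)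
  finally show ?thesis
    using Phi_descent[of "xs (Suc k)" "xs k"] h_descent[OF assms]
    unfolding obj_val_def dx_def by (simp add: algebra_simps)
qed

lemma track_err_Suc_le: "track_err (Suc k) \<le> inner_err k + L / mu * norm (dx k)"
proof -
  have "track_err (Suc k) \<le> inner_err k + norm (ystar g (xs k) - ystar g (xs (Suc k)))"
    unfolding track_err_def inner_err_def
    using norm_triangle_ineq[of "ys (Suc k) - ystar g (xs k)" "ystar g (xs k) - ystar g (xs (Suc k))"] by simp
  also have "\<dots> \<le> inner_err k + L / mu * norm (dx k)"
    using ystar_lipschitz[of "xs k" "xs (Suc k)"] unfolding dx_def by (simp add: norm_minus_commute)
  finally show ?thesis .
qed

lemma lyap_descent:
  assumes "k \<ge> 1"
  shows "lyap (Suc k) \<le> lyap k - L * (norm (dx k))\<^sup>2 - L_hyper / (8 * (L / mu)) * (track_err k)\<^sup>2"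
proof -
  define D E R R' K C where "D = norm (dx k)" and "E = inner_err k" and "R = track_err k"
    and "R' = track_err (Suc k)" and "K = L / mu" and "C = L_hyper"
  have K: "K > 0" unfolding K_def using kappa_gt_1 by simp
  have C: "C > 0" unfolding C_def by (rule L_hyper_pos)
  have nonneg: "D \<ge> 0" "E \<ge> 0" "R' \<ge> 0"
    unfolding D_def E_def R'_def inner_err_def track_err_def by simp_all
  have obj: "obj_val (Suc k) \<le> obj_val k + C * E * D - (1 / (2 * beta) - C * (1 + K) / 2) * D\<^sup>2"
    using obj_descent[OF assms] unfolding C_def E_def D_def K_def .
  have "2 * K * E * D \<le> K\<^sup>2 * D\<^sup>2 + E\<^sup>2"
    using zero_le_power2[of "K * D - E"] by (simp add: power2_eq_square algebra_simps)
  then have "C / (2 * K) * (2 * K * E * D) \<le> C / (2 * K) * (K\<^sup>2 * D\<^sup>2 + E\<^sup>2)"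
    using K C by (intro mult_left_mono) simp_all
  then have cross: "C * E * D \<le> C * K / 2 * D\<^sup>2 + C / (2 * K) * E\<^sup>2"
    using K by (simp add: field_simps power2_eq_square)
  have "R'\<^sup>2 \<le> (E + K * D)\<^sup>2"
    using track_err_Suc_le[of k] nonneg unfolding R'_def E_def K_def D_def by (simp add: power_mono)
  also have "\<dots> \<le> 2 * E\<^sup>2 + 2 * K\<^sup>2 * D\<^sup>2"
    using zero_le_power2[of "E - K * D"] by (simp add: power2_eq_square algebra_simps)
  finally have "R'\<^sup>2 \<le> 2 * E\<^sup>2 + 2 * K\<^sup>2 * D\<^sup>2" .
  moreover have "lyap_weight \<ge> 0" unfolding lyap_weight_def K_def[symmetric] C_def[symmetric] using K C by simp
  ultimately have "lyap_weight * R'\<^sup>2 \<le> lyap_weight * (2 * E\<^sup>2 + 2 * K\<^sup>2 * D\<^sup>2)"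
    by (rule mult_left_mono)
  also have "\<dots> = C / (2 * K) * E\<^sup>2 + C * K / 2 * D\<^sup>2"
    unfolding lyap_weight_def K_def[symmetric] C_def[symmetric] using K by (simp add: field_simps power2_eq_square)
  finally have tracking: "lyap_weight * R'\<^sup>2 \<le> C / (2 * K) * E\<^sup>2 + C * K / 2 * D\<^sup>2" .
  have inner: "C / K * E\<^sup>2 \<le> C / (8 * K) * R\<^sup>2"
    using inner_contraction[of k] C K unfolding E_def R_def inner_err_def track_err_def
    by (simp add: field_simps)
  have "L + C * K \<le> 1 / (2 * beta) - C * (1 + K) / 2"
    using beta_small unfolding C_def[symmetric] K_def[symmetric] by linarith
  then have "(L + C * K) * D\<^sup>2 \<le> (1 / (2 * beta) - C * (1 + K) / 2) * D\<^sup>2"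
    by (rule mult_right_mono) simp
  then have step: "L * D\<^sup>2 + C * K * D\<^sup>2 \<le> (1 / (2 * beta) - C * (1 + K) / 2) * D\<^sup>2"
    by (simp add: distrib_right)
  have weight: "lyap_weight * R\<^sup>2 = 2 * (C / (8 * K) * R\<^sup>2)"
    unfolding lyap_weight_def K_def[symmetric] C_def[symmetric] by simp
  have halves: "C * K / 2 * D\<^sup>2 + C * K / 2 * D\<^sup>2 = C * K * D\<^sup>2" "C / (2 * K) * E\<^sup>2 + C / (2 * K) * E\<^sup>2 = C / K * E\<^sup>2"
    by (simp_all add: field_simps)
  show ?thesis
    using obj cross tracking inner step weight halves
    unfolding lyap_def R_def[symmetric] R'_def[symmetric] D_def[symmetric] C_def[symmetric] K_def[symmetric]
    by linarith
qed

lemma obj_val_bounded_below: "\<exists>c. \<forall>k\<ge>1. c \<le> obj_val k"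
proof -
  obtain c where c: "\<And>x. ereal c \<le> ereal (Phi f g x) + h x" using bdd_below by blast
  have "c \<le> obj_val k" if k: "k \<ge> 1" for k
  proof -
    obtain k' where "k = Suc k'" using k by (cases k) simp_all
    then show ?thesis using c[of "xs k"] unfolding obj_val_def by (simp add: h_finite)
  qed
  then show ?thesis by blast
qed

lemma lyap_weight_pos: "lyap_weight > 0"
  unfolding lyap_weight_def using L_hyper_pos L_pos mu_pos by simp

lemma lyap_gain_pos: "L_hyper / (8 * (L / mu)) > 0"
  using L_hyper_pos L_pos mu_pos by simp

lemma lyap_Suc_decseq: "decseq (\<lambda>j. lyap (Suc j))"
proof (rule decseq_SucI)
  fix j
  have "0 \<le> L * (norm (dx (Suc j)))\<^sup>2" "0 \<le> L_hyper / (8 * (L / mu)) * (track_err (Suc j))\<^sup>2"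
    using L_pos mult_nonneg_nonneg[OF less_imp_le[OF lyap_gain_pos] zero_le_power2] by simp_all
  then show "lyap (Suc (Suc j)) \<le> lyap (Suc j)" using lyap_descent[of "Suc j"] by linarith
qed

definition limit_value :: real where "limit_value = lim (\<lambda>j. lyap (Suc j))"

lemma lyap_Suc_tendsto: "(\<lambda>j. lyap (Suc j)) \<longlonglongrightarrow> limit_value"
proof -
  obtain c where c: "\<And>k. k \<ge> 1 \<Longrightarrow> c \<le> obj_val k" using obj_val_bounded_below by blast
  have "c \<le> lyap (Suc j)" for j
    using c[of "Suc j"] lyap_weight_pos unfolding lyap_def by (simp add: add_increasing2)
  then obtain H where "(\<lambda>j. lyap (Suc j)) \<longlonglongrightarrow> H"
    using decseq_convergent[OF lyap_Suc_decseq] by blast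
  then have "convergent (\<lambda>j. lyap (Suc j))" by (rule convergentI)
  then show ?thesis unfolding limit_value_def by (simp add: convergent_LIMSEQ_iff)
qed

lemma lyap_Suc_diff_tendsto_zero: "(\<lambda>j. lyap (Suc j) - lyap (Suc (Suc j))) \<longlonglongrightarrow> 0"
  using tendsto_diff[OF lyap_Suc_tendsto LIMSEQ_Suc[OF lyap_Suc_tendsto]] by simp

lemma dx_tendsto_zero: "(\<lambda>k. norm (dx k)) \<longlonglongrightarrow> 0"
proof (rule LIMSEQ_imp_Suc, rule tendsto_zero_of_square_le[OF L_pos _ _ lyap_Suc_diff_tendsto_zero])
  fix j
  have "0 \<le> L_hyper / (8 * (L / mu)) * (track_err (Suc j))\<^sup>2"
    using mult_nonneg_nonneg[OF less_imp_le[OF lyap_gain_pos] zero_le_power2] .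
  then show "L * (norm (dx (Suc j)))\<^sup>2 \<le> lyap (Suc j) - lyap (Suc (Suc j))"
    using lyap_descent[of "Suc j"] by linarith
qed simp

lemma track_err_tendsto_zero: "track_err \<longlonglongrightarrow> 0"
proof (rule LIMSEQ_imp_Suc, rule tendsto_zero_of_square_le[OF lyap_gain_pos _ _ lyap_Suc_diff_tendsto_zero])
  fix j
  have "0 \<le> L * (norm (dx (Suc j)))\<^sup>2" using L_pos by simp
  then show "L_hyper / (8 * (L / mu)) * (track_err (Suc j))\<^sup>2 \<le> lyap (Suc j) - lyap (Suc (Suc j))"
    using lyap_descent[of "Suc j"] by linarith
qed (simp add: track_err_def)

lemma inner_err_tendsto_zero: "inner_err \<longlonglongrightarrow> 0"
proof (rule tendsto_sandwich[of "\<lambda>_. 0" _ _ track_err])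
  have "inner_err k \<le> track_err k" for k
  proof (rule power2_le_imp_le)
    show "(inner_err k)\<^sup>2 \<le> (track_err k)\<^sup>2"
      using inner_contraction[of k] zero_le_power2[of "track_err k"]
      unfolding inner_err_def track_err_def by linarith
  qed (simp add: track_err_def)
  then show "\<forall>\<^sub>F k in sequentially. inner_err k \<le> track_err k" by simp
qed (simp_all add: inner_err_def track_err_tendsto_zero)

lemma obj_val_Suc_tendsto: "(\<lambda>k. obj_val (Suc k)) \<longlonglongrightarrow> limit_value"
proof -
  have "(\<lambda>k. lyap (Suc k) - lyap_weight * (track_err (Suc k))\<^sup>2) \<longlonglongrightarrow> limit_value - lyap_weight * 0\<^sup>2"
    by (intro tendsto_intros lyap_Suc_tendsto LIMSEQ_Suc[OF track_err_tendsto_zero])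
  then show ?thesis unfolding lyap_def by simp
qed

lemma obj_val_Suc_le: "obj_val (Suc k) \<le> lyap 1"
proof -
  have "obj_val (Suc k) \<le> lyap (Suc k)"
    unfolding lyap_def using lyap_weight_pos by simp
  also have "\<dots> \<le> lyap (Suc 0)" using lyap_Suc_decseq by (simp add: decseq_def)
  finally show ?thesis by simp
qed

lemma objective_Suc: "objective (xs (Suc k)) = ereal (obj_val (Suc k))"
  unfolding objective_def obj_val_def h_finite by simp

lemma h_quadratic_minorant:
  "ereal (h_val (Suc k) - (1 / beta) *\<^sub>R (xs (Suc k) - prox_center k) \<bullet> (z - xs (Suc k))
     - 1 / (2 * beta) * (norm (z - xs (Suc k)))\<^sup>2) \<le> h z"
proof (cases "h z")
  case (real hz)
  define xp c where "xp = xs (Suc k)" and "c = prox_center k"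
  have "beta * h_val (Suc k) + (norm (xp - c))\<^sup>2 / 2 \<le> beta * hz + (norm (z - c))\<^sup>2 / 2"
    unfolding xp_def c_def by (rule prox_optimality_real[OF real])
  moreover have "(norm (z - c))\<^sup>2 = (norm (z - xp))\<^sup>2 + 2 * ((z - xp) \<bullet> (xp - c)) + (norm (xp - c))\<^sup>2"
    using dot_norm[of "z - xp" "xp - c"] by simp
  ultimately have "beta * h_val (Suc k) - (z - xp) \<bullet> (xp - c) - (norm (z - xp))\<^sup>2 / 2 \<le> beta * hz"
    by linarith
  then have "beta * (h_val (Suc k) - (1 / beta) *\<^sub>R (xp - c) \<bullet> (z - xp) - 1 / (2 * beta) * (norm (z - xp))\<^sup>2)
      \<le> beta * hz"
    using beta_pos by (simp add: algebra_simps inner_commute)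
  then show ?thesis using real beta_pos unfolding xp_def c_def by (simp add: mult_le_cancel_left_pos)
qed (use h_range in auto)

definition subgrad :: "nat \<Rightarrow> 'a" where
  "subgrad k = grad_Phi (xs (Suc k)) - grad_est k - (1 / beta) *\<^sub>R dx k"

lemma subgrad_frechet: "subgrad k \<in> frechet_subdiff objective (xs (Suc k))"
proof -
  have "xs (Suc k) - prox_center k = dx k + beta *\<^sub>R grad_est k"
    unfolding prox_center_def dx_def by simp
  then have "subgrad k = grad_Phi (xs (Suc k)) + - ((1 / beta) *\<^sub>R (xs (Suc k) - prox_center k))"
    unfolding subgrad_def using beta_pos by (simp add: scaleR_add_right)
  also have "\<dots> \<in> frechet_subdiff (\<lambda>z. ereal (Phi f g z) + h z) (xs (Suc k))"
  proof (rule frechet_subdiff_add_quadratic_minorant[where h = h and hx = "h_val (Suc k)" and c = "1 / (2 * beta)"])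
    show "(Phi f g has_derivative (\<lambda>w. grad_Phi (xs (Suc k)) \<bullet> w)) (at (xs (Suc k)))"
      by (rule Phi_has_derivative)
  qed (use h_finite h_quadratic_minorant[of k] in simp_all)
  finally show ?thesis unfolding objective_def[abs_def] .
qed

lemma grad_est_error_tendsto_zero: "(\<lambda>k. grad_est k - grad_Phi (xs k)) \<longlonglongrightarrow> 0"
proof (rule tendsto_norm_zero_cancel, rule tendsto_sandwich[of "\<lambda>_. 0" _ _ "\<lambda>k. L_hyper * inner_err k"])
  show "(\<lambda>k. L_hyper * inner_err k) \<longlonglongrightarrow> 0"
    using tendsto_mult_right_zero[OF inner_err_tendsto_zero] by simp
qed (simp_all add: grad_est_error)

lemma subgrad_tendsto_zero: "subgrad \<longlonglongrightarrow> 0"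
proof -
  define B where "B k = (L_hyper * (1 + L / mu) + 1 / beta) * norm (dx k) + L_hyper * inner_err k" for k
  have bound: "norm (subgrad k) \<le> B k" for k
  proof -
    define a b where "a = grad_Phi (xs (Suc k)) - grad_Phi (xs k)" and "b = grad_est k - grad_Phi (xs k)"
    have "subgrad k = a - b - (1 / beta) *\<^sub>R dx k" unfolding subgrad_def a_def b_def by simp
    then have "norm (subgrad k) \<le> norm a + norm b + norm ((1 / beta) *\<^sub>R dx k)"
      using norm_triangle_ineq4[of "a - b" "(1 / beta) *\<^sub>R dx k"] norm_triangle_ineq4[of a b] by simp
    then have "norm (subgrad k) \<le> norm (grad_Phi (xs (Suc k)) - grad_Phi (xs k)) + norm (grad_est k - grad_Phi (xs k))
        + norm ((1 / beta) *\<^sub>R dx k)"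
      unfolding a_def b_def .
    moreover have "norm (grad_Phi (xs (Suc k)) - grad_Phi (xs k)) \<le> L_hyper * (1 + L / mu) * norm (dx k)"
      unfolding dx_def by (rule grad_Phi_lipschitz)
    moreover have "norm ((1 / beta) *\<^sub>R dx k) = 1 / beta * norm (dx k)" using beta_pos by simp
    moreover have "B k = L_hyper * (1 + L / mu) * norm (dx k) + 1 / beta * norm (dx k) + L_hyper * inner_err k"
      unfolding B_def by (simp add: distrib_right)
    ultimately show ?thesis using grad_est_error[of k] by linarith
  qed
  have "B \<longlonglongrightarrow> 0"
    unfolding B_def by (intro tendsto_add_zero tendsto_mult_right_zero dx_tendsto_zero inner_err_tendsto_zero)
  then have "(\<lambda>k. norm (subgrad k)) \<longlonglongrightarrow> 0"
    by (rule tendsto_sandwich[rotated 2, OF tendsto_const]) (simp_all add: bound)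
  then show ?thesis by (rule tendsto_norm_zero_cancel)
qed

lemma next_iterate_subsequence_tendsto:
  assumes r: "strict_mono r" and lim: "(xs \<circ> r) \<longlonglongrightarrow> x"
  shows "(\<lambda>j. xs (Suc (r j))) \<longlonglongrightarrow> x"
proof -
  have "(\<lambda>j. dx (r j)) \<longlonglongrightarrow> 0"
    using LIMSEQ_subseq_LIMSEQ[OF dx_tendsto_zero[unfolded tendsto_norm_zero_iff] r] by (simp add: o_def)
  from tendsto_add[OF lim[unfolded o_def] this] show ?thesis by (simp add: dx_def)
qed

lemma h_at_limit_point:
  assumes r: "strict_mono r" and lim: "(xs \<circ> r) \<longlonglongrightarrow> x"
  shows "h x = ereal (limit_value - Phi f g x)"
proof -
  define X where "X j = xs (Suc (r j))" for j
  have X: "X \<longlonglongrightarrow> x" unfolding X_def by (rule next_iterate_subsequence_tendsto[OF r lim])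
  have Phi_X: "(\<lambda>j. Phi f g (X j)) \<longlonglongrightarrow> Phi f g x"
    by (rule isCont_tendsto_compose[OF has_derivative_continuous[OF Phi_has_derivative] X])
  have "(\<lambda>j. obj_val (Suc (r j)) - Phi f g (X j)) \<longlonglongrightarrow> limit_value - Phi f g x"
    using LIMSEQ_subseq_LIMSEQ[OF obj_val_Suc_tendsto r] Phi_X by (intro tendsto_diff) (simp_all add: o_def)
  then have h_X: "(\<lambda>j. h_val (Suc (r j))) \<longlonglongrightarrow> limit_value - Phi f g x"
    unfolding obj_val_def X_def by simp
  have lower: "h x \<le> ereal (limit_value - Phi f g x)"
    by (rule lsc_le_lim[OF h_lsc X _ h_X]) (simp add: X_def h_finite)
  then obtain hx where hx: "h x = ereal hx" using h_range[of x] by (cases "h x") auto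
  have "(\<lambda>j. grad_Phi (xs (r j))) \<longlonglongrightarrow> grad_Phi x"
    using continuous_on_tendsto_compose[OF grad_Phi_continuous lim[unfolded o_def]] by simp
  moreover have "(\<lambda>j. grad_est (r j) - grad_Phi (xs (r j))) \<longlonglongrightarrow> 0"
    using LIMSEQ_subseq_LIMSEQ[OF grad_est_error_tendsto_zero r] by (simp add: o_def)
  ultimately have "(\<lambda>j. xs (r j) - beta *\<^sub>R ((grad_est (r j) - grad_Phi (xs (r j))) + grad_Phi (xs (r j))))
      \<longlonglongrightarrow> x - beta *\<^sub>R (0 + grad_Phi x)"
    using lim[unfolded o_def] by (intro tendsto_intros)
  then have "(\<lambda>j. prox_center (r j)) \<longlonglongrightarrow> x - beta *\<^sub>R (0 + grad_Phi x)"
    unfolding prox_center_def by simp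
  then have "beta * (limit_value - Phi f g x) + (norm (x - (x - beta *\<^sub>R (0 + grad_Phi x))))\<^sup>2 / 2
      \<le> beta * hx + (norm (x - (x - beta *\<^sub>R (0 + grad_Phi x))))\<^sup>2 / 2"
    using prox_optimality_real[OF hx]
    by (intro LIMSEQ_le[of "\<lambda>j. beta * h_val (Suc (r j)) + (norm (X j - prox_center (r j)))\<^sup>2 / 2" _
        "\<lambda>j. beta * hx + (norm (x - prox_center (r j)))\<^sup>2 / 2"] tendsto_intros h_X X)
      (auto simp: X_def)
  then have "limit_value - Phi f g x \<le> hx" using beta_pos by simp
  with lower hx show ?thesis by simp
qed

lemma limit_point_objective:
  assumes "x \<in> limit_points xs"
  shows "objective x = ereal limit_value"
  using assms h_at_limit_point unfolding limit_points_def objective_def by auto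

lemma limit_point_critical:
  assumes "x \<in> limit_points xs"
  shows "0 \<in> limiting_subdiff objective x"
proof -
  obtain r where r: "strict_mono r" and lim: "(xs \<circ> r) \<longlonglongrightarrow> x"
    using assms unfolding limit_points_def by blast
  have "(\<lambda>j. objective (xs (Suc (r j)))) \<longlonglongrightarrow> objective x"
    using LIMSEQ_subseq_LIMSEQ[OF obj_val_Suc_tendsto r] limit_point_objective[OF assms]
    unfolding objective_Suc by (simp add: o_def tendsto_ereal)
  moreover have "(subgrad \<circ> r) \<longlonglongrightarrow> 0" by (rule LIMSEQ_subseq_LIMSEQ[OF subgrad_tendsto_zero r])
  ultimately show ?thesis
    unfolding limiting_subdiff_def using next_iterate_subsequence_tendsto[OF r lim] subgrad_frechet
    by (intro CollectI exI[of _ "\<lambda>j. xs (Suc (r j))"] exI[of _ "subgrad \<circ> r"]) auto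
qed

lemma iterates_bounded: "bounded (range (\<lambda>k. (xs k, ys k)))"
proof -
  obtain B0 where B0: "\<And>x. ereal (Phi f g x) + h x \<le> ereal (lyap 1) \<Longrightarrow> norm x \<le> B0"
    using bdd_sublevel[of "lyap 1"] unfolding bounded_iff by blast
  define Bx where "Bx = max B0 (norm (xs 0))"
  have xs_bound: "norm (xs k) \<le> Bx" for k
  proof (cases k)
    case (Suc j)
    then have "norm (xs k) \<le> B0"
      using B0[of "xs k"] obj_val_Suc_le[of j] objective_Suc[of j] unfolding objective_def by simp
    then show ?thesis by (simp add: Bx_def)
  qed (simp add: Bx_def)
  obtain E where E: "\<And>k. norm (track_err k) \<le> E"
    using convergent_imp_Bseq[OF convergentI[OF track_err_tendsto_zero]] unfolding Bseq_def by blast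
  define By where "By = norm (ystar g (xs 0)) + L / mu * (Bx + norm (xs 0)) + E"
  have ys_bound: "norm (ys k) \<le> By" for k
  proof -
    have "norm (ys k) \<le> norm (ystar g (xs k)) + track_err k"
      unfolding track_err_def using norm_triangle_sub[of "ys k" "ystar g (xs k)"] by simp
    also have "norm (ystar g (xs k)) \<le> norm (ystar g (xs 0)) + L / mu * norm (xs k - xs 0)"
      using norm_triangle_sub[of "ystar g (xs k)" "ystar g (xs 0)"] ystar_lipschitz[of "xs k" "xs 0"] by linarith
    also have "L / mu * norm (xs k - xs 0) \<le> L / mu * (Bx + norm (xs 0))"
      using xs_bound[of k] norm_triangle_ineq4[of "xs k" "xs 0"] L_pos mu_pos by (intro mult_left_mono) auto
    finally show ?thesis using E[of k] unfolding By_def by simp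
  qed
  show ?thesis
    unfolding bounded_iff
  proof (intro exI ballI)
    fix p assume "p \<in> range (\<lambda>k. (xs k, ys k))"
    then obtain k where "p = (xs k, ys k)" by blast
    then show "norm p \<le> Bx + By"
      using norm_Pair_le[of "xs k" "ys k"] xs_bound[of k] ys_bound[of k] by simp
  qed
qed

theorem pba_iteration_convergence:
  "(\<lambda>k. norm (xs (Suc k) - xs k)) \<longlonglongrightarrow> 0
    \<and> (\<lambda>k. norm (ys (Suc k) - ystar g (xs k))) \<longlonglongrightarrow> 0
    \<and> (\<exists>H::real. (\<lambda>k. ereal (Phi f g (xs k)) + h (xs k)) \<longlonglongrightarrow> ereal H
        \<and> bounded (range (\<lambda>k. (xs k, ys k)))
        \<and> compact (limit_points (\<lambda>k. (xs k, ys k)))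
        \<and> (\<forall>x\<in>limit_points xs. ereal (Phi f g x) + h x = ereal H)
        \<and> (\<forall>x\<in>limit_points xs. 0 \<in> limiting_subdiff (\<lambda>x. ereal (Phi f g x) + h x) x))"
proof -
  have "(\<lambda>k. objective (xs k)) \<longlonglongrightarrow> ereal limit_value"
    by (rule LIMSEQ_imp_Suc) (simp add: objective_Suc tendsto_ereal obj_val_Suc_tendsto)
  then show ?thesis
    using dx_tendsto_zero inner_err_tendsto_zero iterates_bounded compact_limit_points[OF iterates_bounded]
      limit_point_objective limit_point_critical
    unfolding dx_def inner_err_def[abs_def] objective_def[abs_def] by blast
qed

end

section \<open>The parameter choices of the theorem\<close>

context bilevel
begin

lemma hypergrad_eq_sum_Basis:
  assumes "D2g z (0, v) = snd (Df z)"
  shows "fst (Df z) - (\<Sum>i\<in>Basis. (D2g z (i, 0) \<bullet> v) *\<^sub>R i) = hypergrad z"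
proof -
  have "hyper_v z = v" unfolding hyper_v_def using assms by (intro hess_y_inv_eqI) (simp add: hess_y_def)
  then show ?thesis
    unfolding hypergrad_def adjoint_eq_sum_Basis[OF jac_xy_linear] by (simp add: jac_xy_def)
qed

lemma agd_inner_contraction:
  assumes "mu < L" and factor: "(1 + L / mu) * (1 - 1 / sqrt (L / mu)) ^ T \<le> 1 / 8"
  shows "(norm (snd (agd (\<lambda>y. snd (Dg (x, y))) (1 / L) ((sqrt (L / mu) - 1) / (sqrt (L / mu) + 1)) y0 T)
      - ystar g x))\<^sup>2 \<le> (norm (y0 - ystar g x))\<^sup>2 / 8"
proof -
  interpret lower: smooth_strongly_convex "\<lambda>y. g (x, y)" "\<lambda>y. snd (Dg (x, y))" mu L
    using g_y_has_derivative g_sc grad_y_lipschitz mu_pos assms(1) by unfold_locales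
  have "(norm (snd (lower.iterate y0 T) - ystar g x))\<^sup>2
      \<le> (1 + L / mu) * (1 - 1 / sqrt (L / mu)) ^ T * (norm (y0 - ystar g x))\<^sup>2"
    by (rule lower.agd_linear_convergence[OF grad_y_ystar])
  also have "\<dots> \<le> 1 / 8 * (norm (y0 - ystar g x))\<^sup>2"
    using factor by (intro mult_right_mono) simp_all
  finally show ?thesis unfolding lower.momentum_def lower.sqrt_kappa_def by simp
qed

end

lemma agd_factor_le_eighth:
  fixes kappa :: real and T :: nat
  assumes kappa: "kappa > 1" and T: "real T \<ge> ln (8 * (1 + kappa)) / ln (1 / (1 - 1 / sqrt kappa))"
  shows "(1 + kappa) * (1 - 1 / sqrt kappa) ^ T \<le> 1 / 8"
proof -
  define q where "q = 1 - 1 / sqrt kappa"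
  have q: "0 < q" "q < 1" unfolding q_def using kappa by (simp_all add: field_simps)
  then have "ln (1 / q) > 0" by (simp add: ln_div)
  then have "ln (8 * (1 + kappa)) \<le> real T * ln (1 / q)"
    using T unfolding q_def[symmetric] by (simp add: pos_divide_le_eq)
  then have "real T * ln q \<le> - ln (8 * (1 + kappa))" using q by (simp add: ln_div)
  then have "exp (real T * ln q) \<le> exp (- ln (8 * (1 + kappa)))" by (simp only: exp_le_cancel_iff)
  moreover have "q ^ T = exp (real T * ln q)" using q by (simp add: exp_ln ln_realpow[symmetric])
  ultimately have "q ^ T \<le> exp (- ln (8 * (1 + kappa)))" by simp
  also have "\<dots> = 1 / (8 * (1 + kappa))"
    using kappa by (simp add: exp_minus exp_ln inverse_eq_divide)
  finally have "q ^ T \<le> 1 / (8 * (1 + kappa))" .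
  then show ?thesis unfolding q_def[symmetric] using kappa by (simp add: field_simps)
qed

lemma step_size_condition_normalized:
  fixes L k r s t :: real
  assumes k: "k > 1" and L: "L > 0" and r: "r \<ge> 0" and s: "s \<ge> 0" and t: "t \<ge> 0"
  defines "C \<equiv> L + L * k + L * r + s"
  shows "C * (1 + k) / 2 + C * k + L
    \<le> (L + 2 * L * k + t + L * r + L * k\<^sup>2 + s * k + L * r * k)
      + (3 * L\<^sup>2 + 3 * s\<^sup>2 + 6 * L\<^sup>2 * (1 + sqrt k)\<^sup>2 * (k + r)\<^sup>2) + k\<^sup>2"
proof -
  have "C \<ge> 0" unfolding C_def using k L r s by simp
  then have "C * 1 \<le> C * k" using k by (intro mult_left_mono) simp_all
  then have "C * (1 + k) / 2 + C * k + L \<le> 2 * C * k + L" by (simp add: field_simps)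
  also have "\<dots> = 2 * L * k + 2 * L * k\<^sup>2 + 2 * (L * r) * k + 2 * s * k + L"
    unfolding C_def by (simp add: power2_eq_square algebra_simps)
  also have "\<dots> \<le> L + 2 * L * k + L * k\<^sup>2 + s * k + (L * r) * k + 3 * s\<^sup>2 + 24 * L\<^sup>2 * k\<^sup>2 + 24 * (L * r)\<^sup>2 + k\<^sup>2"
  proof -
    have amgm: "a * k \<le> k\<^sup>2 / 3 + 3 * a\<^sup>2" for a
    proof -
      have "6 * a * k \<le> k\<^sup>2 + 9 * a\<^sup>2"
        using zero_le_power2[of "k - 3 * a"] by (simp add: power2_eq_square algebra_simps)
      then show ?thesis using zero_le_power2[of k] zero_le_power2[of a] by linarith
    qed
    have "s * k \<le> k\<^sup>2 / 3 + 3 * s\<^sup>2" by (rule amgm)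
    moreover have "(L * r) * k \<le> k\<^sup>2 / 3 + 24 * (L * r)\<^sup>2"
      using amgm[of "L * r"] zero_le_power2[of "L * r"] by linarith
    moreover have "L \<le> 1 / 3 + 24 * L\<^sup>2"
    proof -
      have "12 * L \<le> 1 + 36 * L\<^sup>2"
        using zero_le_power2[of "1 - 6 * L"] by (simp add: power2_eq_square algebra_simps)
      then show ?thesis using zero_le_power2[of L] by linarith
    qed
    then have "L * k\<^sup>2 \<le> k\<^sup>2 / 3 + 24 * L\<^sup>2 * k\<^sup>2"
      using mult_right_mono[of L "1 / 3 + 24 * L\<^sup>2" "k\<^sup>2"] by (simp add: algebra_simps)
    ultimately show ?thesis by linarith
  qed
  also have "\<dots> \<le> (L + 2 * L * k + t + L * r + L * k\<^sup>2 + s * k + L * r * k)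
      + (3 * L\<^sup>2 + 3 * s\<^sup>2 + 6 * L\<^sup>2 * (1 + sqrt k)\<^sup>2 * (k + r)\<^sup>2) + k\<^sup>2"
  proof -
    have "4 \<le> (1 + sqrt k)\<^sup>2" using power_mono[of 2 "1 + sqrt k" 2] k by simp
    moreover have "k\<^sup>2 + r\<^sup>2 \<le> (k + r)\<^sup>2" using k r by (simp add: power2_eq_square algebra_simps)
    ultimately have "6 * L\<^sup>2 * 4 * (k\<^sup>2 + r\<^sup>2) \<le> 6 * L\<^sup>2 * (1 + sqrt k)\<^sup>2 * (k + r)\<^sup>2"
      by (intro mult_mono mult_left_mono) simp_all
    moreover have "0 \<le> L * r" using L r by simp
    ultimately show ?thesis using t
      by (simp add: power_mult_distrib algebra_simps) (use zero_le_power2[of L] in linarith)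
  qed
  finally show ?thesis .
qed

lemma (in bilevel) step_size_condition:
  assumes "mu < L"
  shows "L_hyper * (1 + L / mu) / 2 + L_hyper * (L / mu) + L
    \<le> (L + (2 * L\<^sup>2 + tau * M\<^sup>2) / mu + (rho * L * M + L ^ 3 + tau * M * L) / mu\<^sup>2 + rho * L\<^sup>2 * M / mu ^ 3)
      + (3 * L\<^sup>2 + 3 * tau\<^sup>2 * M\<^sup>2 / mu\<^sup>2 + 6 * L\<^sup>2 * (1 + sqrt (L / mu))\<^sup>2 * (L / mu + rho * M / mu\<^sup>2)\<^sup>2)
      + (L / mu)\<^sup>2"
proof -
  have "L / mu > 1" "L > 0" using assms mu_pos by simp_all
  then have "L_hyper * (1 + L / mu) / 2 + L_hyper * (L / mu) + L
    \<le> (L + 2 * L * (L / mu) + tau * M\<^sup>2 / mu + L * (rho * M / mu\<^sup>2) + L * (L / mu)\<^sup>2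
          + tau * M / mu * (L / mu) + L * (rho * M / mu\<^sup>2) * (L / mu))
      + (3 * L\<^sup>2 + 3 * (tau * M / mu)\<^sup>2 + 6 * L\<^sup>2 * (1 + sqrt (L / mu))\<^sup>2 * (L / mu + rho * M / mu\<^sup>2)\<^sup>2)
      + (L / mu)\<^sup>2"
    unfolding L_hyper_def
    using step_size_condition_normalized[of "L / mu" L "rho * M / mu\<^sup>2" "tau * M / mu" "tau * M\<^sup>2 / mu"]
      mu_pos M_nonneg tau_nonneg rho_nonneg
    by (simp add: algebra_simps)
  also have "\<dots> = (L + (2 * L\<^sup>2 + tau * M\<^sup>2) / mu + (rho * L * M + L ^ 3 + tau * M * L) / mu\<^sup>2 + rho * L\<^sup>2 * M / mu ^ 3)
      + (3 * L\<^sup>2 + 3 * tau\<^sup>2 * M\<^sup>2 / mu\<^sup>2 + 6 * L\<^sup>2 * (1 + sqrt (L / mu))\<^sup>2 * (L / mu + rho * M / mu\<^sup>2)\<^sup>2)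
      + (L / mu)\<^sup>2"
    using mu_pos by (simp add: field_simps power2_eq_square power3_eq_cube)
  finally show ?thesis .
qed

lemma (in bilevel) step_size_small:
  assumes "mu < L" and beta: "0 < beta"
    and beta_le: "beta \<le> 1 / (2 * ((L + (2 * L\<^sup>2 + tau * M\<^sup>2) / mu + (rho * L * M + L ^ 3 + tau * M * L) / mu\<^sup>2
      + rho * L\<^sup>2 * M / mu ^ 3) + (3 * L\<^sup>2 + 3 * tau\<^sup>2 * M\<^sup>2 / mu\<^sup>2
      + 6 * L\<^sup>2 * (1 + sqrt (L / mu))\<^sup>2 * (L / mu + rho * M / mu\<^sup>2)\<^sup>2) + (L / mu)\<^sup>2))"
  shows "L_hyper * (1 + L / mu) / 2 + L_hyper * (L / mu) + L \<le> 1 / (2 * beta)"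
proof -
  define S where "S = (L + (2 * L\<^sup>2 + tau * M\<^sup>2) / mu + (rho * L * M + L ^ 3 + tau * M * L) / mu\<^sup>2
      + rho * L\<^sup>2 * M / mu ^ 3) + (3 * L\<^sup>2 + 3 * tau\<^sup>2 * M\<^sup>2 / mu\<^sup>2
      + 6 * L\<^sup>2 * (1 + sqrt (L / mu))\<^sup>2 * (L / mu + rho * M / mu\<^sup>2)\<^sup>2) + (L / mu)\<^sup>2"
  have condition: "L_hyper * (1 + L / mu) / 2 + L_hyper * (L / mu) + L \<le> S"
    unfolding S_def by (rule step_size_condition[OF assms(1)])
  moreover have "0 \<le> L_hyper * (1 + L / mu) / 2 + L_hyper * (L / mu)"
    using L_hyper_ge L_nonneg mu_pos by simp
  ultimately have "0 < S" using assms(1) mu_pos by linarith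
  then have "beta * (2 * S) \<le> 1" using beta_le unfolding S_def[symmetric] by (simp add: le_divide_eq)
  then have "S \<le> 1 / (2 * beta)" using beta by (simp add: le_divide_eq field_simps)
  with condition show ?thesis by linarith
qed

theorem theorem1:
  fixes f g :: "'a::euclidean_space \<times> 'b::euclidean_space \<Rightarrow> real"
    and Df Dg :: "'a \<times> 'b \<Rightarrow> 'a \<times> 'b"
    and D2g :: "'a \<times> 'b \<Rightarrow> ('a \<times> 'b \<Rightarrow> 'b)"
    and h :: "'a \<Rightarrow> ereal"
    and mu L M tau rho kappa L_Phi Gamma alpha beta eta :: real
    and T :: nat
    and xs :: "nat \<Rightarrow> 'a" and ys :: "nat \<Rightarrow> 'b" and vs :: "nat \<Rightarrow> 'b"
  assumes \<comment> \<open>joint continuous differentiability of f and g (gradients Df, Dg)\<close>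
    f_deriv: "\<And>z. (f has_derivative (\<lambda>w. Df z \<bullet> w)) (at z)"
    and g_deriv: "\<And>z. (g has_derivative (\<lambda>w. Dg z \<bullet> w)) (at z)"
    and Df_cont: "continuous_on UNIV Df" and Dg_cont: "continuous_on UNIV Dg"
    \<comment> \<open>second derivative of z \<mapsto> grad_y g(z); contains Hessian and Jacobian\<close>
    and g_deriv2: "\<And>z. ((\<lambda>z. snd (Dg z)) has_derivative D2g z) (at z)"
    \<comment> \<open>A1\<close>
    and mu_pos: "mu > 0"
    and g_sc: "\<And>x. strongly_convex_with mu (\<lambda>y. g (x, y))"
    and h_range: "\<And>x. h x \<noteq> - \<infinity>"
    and h_proper: "\<exists>x. h x \<noteq> \<infinity>"
    and h_lsc: "lsc h"
    and bdd_below: "\<exists>c::real. \<forall>x. ereal c \<le> ereal (Phi f g x) + h x"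
    and bdd_sublevel: "\<And>c::real. bounded {x. ereal (Phi f g x) + h x \<le> ereal c}"
    \<comment> \<open>A2\<close>
    and consts_nonneg: "M \<ge> 0" "L \<ge> 0" "tau \<ge> 0" "rho \<ge> 0"
    and f_lip: "\<And>z z'. \<bar>f z - f z'\<bar> \<le> M * norm (z - z')"
    and Df_lip: "\<And>z z'. norm (Df z - Df z') \<le> L * norm (z - z')"
    and Dg_lip: "\<And>z z'. norm (Dg z - Dg z') \<le> L * norm (z - z')"
    and Jac_lip: "\<And>z z' u. norm (D2g z (u, 0) - D2g z' (u, 0)) \<le> tau * norm (z - z') * norm u"
    and Hess_lip: "\<And>z z' v. norm (D2g z (0, v) - D2g z' (0, v)) \<le> rho * norm (z - z') * norm v"
    \<comment> \<open>constants\<close>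
    and kappa_def: "kappa = L / mu"
    and L_Phi_def: "L_Phi = L + (2 * L\<^sup>2 + tau * M\<^sup>2) / mu
        + (rho * L * M + L ^ 3 + tau * M * L) / mu\<^sup>2 + rho * L\<^sup>2 * M / mu ^ 3"
    and Gamma_def: "Gamma = 3 * L\<^sup>2 + 3 * tau\<^sup>2 * M\<^sup>2 / mu\<^sup>2
        + 6 * L\<^sup>2 * (1 + sqrt kappa)\<^sup>2 * (kappa + rho * M / mu\<^sup>2)\<^sup>2"
    and kappa_gt: "kappa > 1"
    \<comment> \<open>parameters\<close>
    and alpha_def: "alpha = 1 / L"
    and eta_def: "eta = (sqrt kappa - 1) / (sqrt kappa + 1)"
    and beta_pos: "0 < beta"
    and beta_le: "beta \<le> 1 / (2 * (L_Phi + Gamma + kappa\<^sup>2))"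
    and T_ge: "real T \<ge> ln (8 * (1 + kappa)) / ln (1 / (1 - 1 / sqrt kappa))"
    \<comment> \<open>Algorithm PBA\<close>
    and inner: "\<And>k. ys (Suc k) = snd (agd (\<lambda>y. snd (Dg (xs k, y))) alpha eta (ys k) T)"
    and v_sol: "\<And>k. D2g (xs k, ys (Suc k)) (0, vs k) = snd (Df (xs k, ys (Suc k)))"
    and prox_step: "\<And>k. xs (Suc k) \<in> prox beta h
        (xs k - beta *\<^sub>R (fst (Df (xs k, ys (Suc k)))
           - (\<Sum>i\<in>Basis. (D2g (xs k, ys (Suc k)) (i, 0) \<bullet> vs k) *\<^sub>R i)))"
  shows "(\<lambda>k. norm (xs (Suc k) - xs k)) \<longlonglongrightarrow> 0
    \<and> (\<lambda>k. norm (ys (Suc k) - ystar g (xs k))) \<longlonglongrightarrow> 0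
    \<and> (\<exists>H::real. (\<lambda>k. ereal (Phi f g (xs k)) + h (xs k)) \<longlonglongrightarrow> ereal H
        \<and> bounded (range (\<lambda>k. (xs k, ys k)))
        \<and> compact (limit_points (\<lambda>k. (xs k, ys k)))
        \<and> (\<forall>x\<in>limit_points xs. ereal (Phi f g x) + h x = ereal H)
        \<and> (\<forall>x\<in>limit_points xs. 0 \<in> limiting_subdiff (\<lambda>x. ereal (Phi f g x) + h x) x))"
proof -
  interpret bilevel f g Df Dg D2g mu L M tau rho
    by unfold_locales (fact f_deriv g_deriv g_deriv2 mu_pos g_sc consts_nonneg f_lip Df_lip Dg_lip Jac_lip Hess_lip)+
  have mu_less_L: "mu < L" using kappa_gt mu_pos unfolding kappa_def by (simp add: field_simps)
  have inner_contraction: "(norm (ys (Suc k) - ystar g (xs k)))\<^sup>2 \<le> (norm (ys k - ystar g (xs k)))\<^sup>2 / 8" for k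
    unfolding inner alpha_def eta_def kappa_def
    by (rule agd_inner_contraction[OF mu_less_L agd_factor_le_eighth]) (use kappa_gt T_ge in \<open>simp_all add: kappa_def\<close>)
  have beta_small: "L_hyper * (1 + L / mu) / 2 + L_hyper * (L / mu) + L \<le> 1 / (2 * beta)"
    using beta_le unfolding L_Phi_def Gamma_def kappa_def by (rule step_size_small[OF mu_less_L beta_pos])
  have hypergrad_step: "xs (Suc k) \<in> prox beta h (xs k - beta *\<^sub>R hypergrad (xs k, ys (Suc k)))" for k
    using prox_step[of k] unfolding hypergrad_eq_sum_Basis[OF v_sol] .
  interpret pba_iteration f g Df Dg D2g mu L M tau rho h beta xs ys
    by unfold_locales
      (fact h_range h_proper h_lsc bdd_below bdd_sublevel mu_less_L beta_pos beta_small inner_contraction hypergrad_step)+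
  show ?thesis by (rule pba_iteration_convergence)
qed

end
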